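(* Assume Conditions (A), (P) and (Ah) from the context and let $\tau>0$. Then for all $\zeta\in[0,1]$, \[\big\|(I+\tau A_{h,2})\big(e^{-\tau A_h}-(I+\tau A_{h,2})^{-1}(I+\tau A_{h,1})^{-1}\big)P_hA^{-\zeta}\big\|_{\mathcal L(H)}\le C\tau^{\zeta},\] with $C$ independent of $h$ and $\tau$.
   Context: $(H,(\cdot,\cdot)_H,\|\cdot\|_H)$ is a real Hilbert space with complexification $H_{\mathbb C}$; $C$ denotes generic constants independent of $h$ and $\tau$. Condition (A): $A:\mathrm{dom}(A)\subset H\to H$ and $A_\ell:\mathrm{dom}(A_\ell)\subset H\to H$ ($\ell=1,2$) are linear with $A=A_1+A_2$ on $\mathrm{dom}(A_1)\cap\mathrm{dom}(A_2)\subseteq\mathrm{dom}(A)$; $A$ is densely defined, positive and sectorial: there is $\varphi\in(0,\pi/2)$ such that $0$ and $S_\varphi=\{\lambda\in\mathbb C:\varphi<|\arg\lambda|\le\pi\}$ lie in the resolvent set and $\|(A-\lambda I)^{-1}\|_{\mathcal L(H_{\mathbb C})}\le C/|\lambda|$ on $S_\varphi$; $A_\ell A^{-1}$ is a well-defined bounded operator on $H$. $A^{-\zeta}$ denote negative fractional powers of $A$. Condition (P): $V_h\subset H$ ($h\in I\subset(0,\infty)$) are finite-dimensional subspaces and $P_h:H\to V_h$ bounded projections with $\|(I-P_h)v\|_H\le Ch^2\|Av\|_H$ for $v\in\mathrm{dom}(A)$. Condition (Ah): $V_h$ carries an inner product with norm $\|\cdot\|_{V_h}$, $\|v_h\|_H\le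 C\|v_h\|_{V_h}$, and $A_h,A_{h,1},A_{h,2}\in\mathcal L(V_h)$ satisfy for all $v_h,w_h\in V_h$, $\ell=1,2$: (a) $(A_hv_h,v_h)_H\ge C\|v_h\|^2_{V_h}$; (b) $|(A_hv_h,w_h)_H|\le C\|v_h\|_{V_h}\|w_h\|_{V_h}$; (c) $A_h=A_{h,1}+A_{h,2}$; (d) $(A_{h,\ell}v_h,v_h)_H\ge0$; (e) $\|A_{h,\ell}P_h\|_{\mathcal L(H)}\le Ch^{-2}$; (f) $\|(P_hA_\ell-A_{h,\ell}P_h)v\|_H\le C\|Av\|_H$ for $v\in\mathrm{dom}(A)$; (g) $\|A^{-1}-A_h^{-1}P_h\|_{\mathcal L(H)}\le Ch^2$. $e^{-tA_h}$ is the semigroup generated by $-A_h$ on $V_h$. Operators on $V_h$ composed with $P_h$ are regarded as operators on $H$; $\|\cdot\|_{\mathcal L(H)}$ is the operator norm w.r.t. $\|\cdot\|_H$. *)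

theory Defs
  imports "HOL-Analysis.Analysis"
begin

text \<open>Unbounded linear operators are modelled as a domain set D together with a
  function T that is linear on D (values outside D are irrelevant).\<close>

definition lin_on :: "'a::real_vector set \<Rightarrow> ('a \<Rightarrow> 'a) \<Rightarrow> bool" where
  "lin_on D T \<longleftrightarrow> subspace D \<and>
     (\<forall>x\<in>D. \<forall>y\<in>D. T (x + y) = T x + T y) \<and>
     (\<forall>c. \<forall>x\<in>D. T (c *\<^sub>R x) = c *\<^sub>R T x)"

text \<open>The complexification: H_C is modelled as H \<times> H (x + iy \<mapsto> (x,y)), with
  norm sqrt(|x|^2+|y|^2) (the product norm). cshift A z is A - z I on H_C.\<close>

definition cshift :: "('a::real_vector \<Rightarrow> 'a) \<Rightarrow> complex \<Rightarrow> 'a \<times> 'a \<Rightarrow> 'a \<times> 'a" where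
  "cshift A z p = (A (fst p) - Re z *\<^sub>R fst p + Im z *\<^sub>R snd p,
                   A (snd p) - Re z *\<^sub>R snd p - Im z *\<^sub>R fst p)"

definition in_resolvent_set :: "'a::real_normed_vector set \<Rightarrow> ('a \<Rightarrow> 'a) \<Rightarrow> complex \<Rightarrow> bool" where
  "in_resolvent_set D A z \<longleftrightarrow>
     (\<forall>q. \<exists>!p. p \<in> D \<times> D \<and> cshift A z p = q) \<and>
     (\<exists>M. \<forall>p\<in>D \<times> D. norm p \<le> M * norm (cshift A z p))"

definition inv_op :: "'a set \<Rightarrow> ('a \<Rightarrow> 'a) \<Rightarrow> 'a \<Rightarrow> 'a" where
  "inv_op D T y = (THE x. x \<in> D \<and> T x = y)"

definition res_op :: "'a::real_vector set \<Rightarrow> ('a \<Rightarrow> 'a) \<Rightarrow> real \<Rightarrow> 'a \<Rightarrow> 'a" where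
  "res_op D A t y = (THE x. x \<in> D \<and> A x + t *\<^sub>R x = y)"

text \<open>Negative fractional powers A^{-\<zeta>}, 0 \<le> \<zeta> \<le> 1, via Balakrishnan's formula
  A^{-\<zeta>} = (sin(\<pi>\<zeta>)/\<pi>) \<integral>_0^\<infinity> t^{-\<zeta>} (t I + A)^{-1} dt for 0 < \<zeta> < 1,
  A^0 = I, A^{-1} the inverse of A.\<close>

definition neg_frac_pow :: "'a::real_normed_vector set \<Rightarrow> ('a \<Rightarrow> 'a) \<Rightarrow> real \<Rightarrow> 'a \<Rightarrow> 'a" where
  "neg_frac_pow D A \<zeta> y =
     (if \<zeta> = 0 then y
      else if \<zeta> = 1 then inv_op D A y
      else (sin (pi * \<zeta>) / pi) *\<^sub>R integral {0<..} (\<lambda>t. (t powr (-\<zeta>)) *\<^sub>R res_op D A t y))"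

text \<open>The semigroup e^{-t T} generated by -T on a finite-dimensional space
  (exponential series).\<close>

definition semigroup_op :: "('a::real_normed_vector \<Rightarrow> 'a) \<Rightarrow> real \<Rightarrow> 'a \<Rightarrow> 'a" where
  "semigroup_op T t v = (\<Sum>n. ((- t) ^ n / fact n) *\<^sub>R (T ^^ n) v)"

definition shift_inv :: "'a::real_vector set \<Rightarrow> ('a \<Rightarrow> 'a) \<Rightarrow> real \<Rightarrow> 'a \<Rightarrow> 'a" where
  "shift_inv V T \<tau> v = (THE w. w \<in> V \<and> w + \<tau> *\<^sub>R T w = v)"

definition condA :: "'a::real_inner set \<Rightarrow> ('a \<Rightarrow> 'a) \<Rightarrow> 'a set \<Rightarrow> ('a \<Rightarrow> 'a)
    \<Rightarrow> 'a set \<Rightarrow> ('a \<Rightarrow> 'a) \<Rightarrow> bool" where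
  "condA D A D1 A1 D2 A2 \<longleftrightarrow>
     lin_on D A \<and> lin_on D1 A1 \<and> lin_on D2 A2 \<and>
     D1 \<inter> D2 \<subseteq> D \<and> (\<forall>v\<in>D1 \<inter> D2. A v = A1 v + A2 v) \<and>
     closure D = UNIV \<and>
     (\<forall>v\<in>D. inner (A v) v \<ge> 0) \<and>
     (\<exists>\<phi>. 0 < \<phi> \<and> \<phi> < pi / 2 \<and> in_resolvent_set D A 0 \<and>
        (\<exists>C. \<forall>z. \<phi> < \<bar>Arg z\<bar> \<longrightarrow>
           in_resolvent_set D A z \<and>
           (\<forall>p\<in>D \<times> D. cmod z * norm p \<le> C * norm (cshift A z p)))) \<and>
     (\<forall>y. inv_op D A y \<in> D1 \<and> inv_op D A y \<in> D2) \<and>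
     (\<exists>M. \<forall>y. norm (A1 (inv_op D A y)) \<le> M * norm y) \<and>
     (\<exists>M. \<forall>y. norm (A2 (inv_op D A y)) \<le> M * norm y)"

definition condP :: "real set \<Rightarrow> (real \<Rightarrow> 'a::real_normed_vector set) \<Rightarrow> (real \<Rightarrow> 'a \<Rightarrow> 'a)
    \<Rightarrow> 'a set \<Rightarrow> ('a \<Rightarrow> 'a) \<Rightarrow> bool" where
  "condP I V P D A \<longleftrightarrow>
     I \<subseteq> {0<..} \<and>
     (\<forall>h\<in>I. subspace (V h) \<and> (\<exists>B. finite B \<and> V h = span B) \<and>
        bounded_linear (P h) \<and> (\<forall>x. P h x \<in> V h) \<and> (\<forall>v\<in>V h. P h v = v)) \<and>
     (\<exists>C. \<forall>h\<in>I. \<forall>v\<in>D. norm (v - P h v) \<le> C * h\<^sup>2 * norm (A v))"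

definition inner_on :: "'a::real_vector set \<Rightarrow> ('a \<Rightarrow> 'a \<Rightarrow> real) \<Rightarrow> bool" where
  "inner_on V ip \<longleftrightarrow>
     (\<forall>u\<in>V. \<forall>v\<in>V. ip u v = ip v u) \<and>
     (\<forall>u\<in>V. \<forall>v\<in>V. \<forall>w\<in>V. ip (u + v) w = ip u w + ip v w) \<and>
     (\<forall>c. \<forall>u\<in>V. \<forall>v\<in>V. ip (c *\<^sub>R u) v = c * ip u v) \<and>
     (\<forall>v\<in>V. v \<noteq> 0 \<longrightarrow> ip v v > 0)"

definition normV :: "('a \<Rightarrow> 'a \<Rightarrow> real) \<Rightarrow> 'a \<Rightarrow> real" where
  "normV ip v = sqrt (ip v v)"

definition condAh :: "real set \<Rightarrow> (real \<Rightarrow> 'a::real_inner set) \<Rightarrow> (real \<Rightarrow> 'a \<Rightarrow> 'a)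
    \<Rightarrow> (real \<Rightarrow> 'a \<Rightarrow> 'a \<Rightarrow> real)
    \<Rightarrow> (real \<Rightarrow> 'a \<Rightarrow> 'a) \<Rightarrow> (real \<Rightarrow> 'a \<Rightarrow> 'a) \<Rightarrow> (real \<Rightarrow> 'a \<Rightarrow> 'a)
    \<Rightarrow> 'a set \<Rightarrow> ('a \<Rightarrow> 'a) \<Rightarrow> ('a \<Rightarrow> 'a) \<Rightarrow> ('a \<Rightarrow> 'a) \<Rightarrow> bool" where
  "condAh I V P ipV Ah Ah1 Ah2 D A A1 A2 \<longleftrightarrow>
     (\<forall>h\<in>I. inner_on (V h) (ipV h) \<and>
        lin_on (V h) (Ah h) \<and> lin_on (V h) (Ah1 h) \<and> lin_on (V h) (Ah2 h) \<and>
        (\<forall>v\<in>V h. Ah h v \<in> V h \<and> Ah1 h v \<in> V h \<and> Ah2 h v \<in> V h)) \<and>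
     (\<exists>C. \<forall>h\<in>I. \<forall>v\<in>V h. norm v \<le> C * normV (ipV h) v) \<and>
     \<comment> \<open>(a)\<close>
     (\<exists>C>0. \<forall>h\<in>I. \<forall>v\<in>V h. inner (Ah h v) v \<ge> C * (normV (ipV h) v)\<^sup>2) \<and>
     \<comment> \<open>(b)\<close>
     (\<exists>C. \<forall>h\<in>I. \<forall>v\<in>V h. \<forall>w\<in>V h.
        \<bar>inner (Ah h v) w\<bar> \<le> C * normV (ipV h) v * normV (ipV h) w) \<and>
     \<comment> \<open>(c)\<close>
     (\<forall>h\<in>I. \<forall>v\<in>V h. Ah h v = Ah1 h v + Ah2 h v) \<and>
     \<comment> \<open>(d)\<close>
     (\<forall>h\<in>I. \<forall>v\<in>V h. inner (Ah1 h v) v \<ge> 0 \<and> inner (Ah2 h v) v \<ge> 0) \<and>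
     \<comment> \<open>(e)\<close>
     (\<exists>C. \<forall>h\<in>I. \<forall>x. norm (Ah1 h (P h x)) \<le> C / h\<^sup>2 * norm x \<and>
                     norm (Ah2 h (P h x)) \<le> C / h\<^sup>2 * norm x) \<and>
     \<comment> \<open>(f)\<close>
     (\<exists>C. \<forall>h\<in>I. \<forall>v\<in>D. norm (P h (A1 v) - Ah1 h (P h v)) \<le> C * norm (A v) \<and>
                      norm (P h (A2 v) - Ah2 h (P h v)) \<le> C * norm (A v)) \<and>
     \<comment> \<open>(g)\<close>
     (\<exists>C. \<forall>h\<in>I. \<forall>x. norm (inv_op D A x - inv_op (V h) (Ah h) (P h x)) \<le> C * h\<^sup>2 * norm x)"

end

theory Submission
  imports Defs
begin

(*
  Write t = tau, A = A_h and A_l = A_{h,l}. On V_h the defect operator is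
    (I + t A_2)(e^{-tA} - (I + t A_2)^{-1} (I + t A_1)^{-1}) = e^{-tA} + t A_2 e^{-tA} - (I + t A_1)^{-1}.
  The semigroup and the resolvents are contractions because A_1, A_2 are accretive, and coercivity
  gives the analytic smoothing bound t |A e^{-tA} v| <= C |v|; hence the defect composed with P_h is
  bounded uniformly in h and t (zeta = 0), once P_h itself is shown to be uniformly bounded.
  Composed with P_h A^{-1} it is O(t) (zeta = 1): on u = A_h^{-1} P_h y every term differs from u by
  t times A_h u or A_{h,l} u, and |A_{h,l} u| <= K |A_h u| follows from the consistency conditions;
  the remainder P_h A^{-1} y - u is O(h^2), which compensates the crude bound O(t h^{-2}) of the
  defect. For 0 < zeta < 1, Balakrishnan's formula writes A^{-zeta} as an integral of resolvents
  (s + A)^{-1}; splitting it at s = 1/t interpolates between the two estimates.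
*)

section \<open>Exponential series of a bounded operator\<close>

lemma norm_funpow_le:
  fixes G :: "'a::real_normed_vector \<Rightarrow> 'a"
  assumes "\<And>x. norm (G x) \<le> K * norm x" and "K \<ge> 0"
  shows "norm ((G ^^ n) v) \<le> K ^ n * norm v"
proof (induction n)
  case (Suc n)
  have "norm ((G ^^ Suc n) v) \<le> K * norm ((G ^^ n) v)" using assms(1) by simp
  also have "\<dots> \<le> K * (K ^ n * norm v)" using Suc \<open>K \<ge> 0\<close> by (simp add: mult_left_mono)
  finally show ?case by simp
qed simp

lemma bounded_linear_funpow_bound:
  fixes G :: "'a::real_normed_vector \<Rightarrow> 'a"
  assumes "bounded_linear G"
  obtains K where "K \<ge> 0" and "\<And>n v. norm ((G ^^ n) v) \<le> K ^ n * norm v"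
proof -
  obtain K where "K \<ge> 0" and "\<And>x. norm (G x) \<le> norm x * K"
    using bounded_linear.nonneg_bounded[OF assms] by blast
  then show thesis using that norm_funpow_le[of G K] by (simp add: mult.commute)
qed

lemma norm_exp_series_term_le:
  fixes w :: "nat \<Rightarrow> 'a::real_normed_vector"
  assumes "norm (w n) \<le> K ^ n * c" and "K \<ge> 0" and "\<bar>s\<bar> \<le> R"
  shows "norm (((- s) ^ n / fact n) *\<^sub>R w n) \<le> (R * K) ^ n / fact n * c"
proof -
  have "norm (((- s) ^ n / fact n) *\<^sub>R w n) = \<bar>s\<bar> ^ n / fact n * norm (w n)"
    by (simp add: power_abs)
  also have "\<dots> \<le> R ^ n / fact n * (K ^ n * c)"
    by (intro mult_mono divide_right_mono power_mono assms(1)) (use assms in auto)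
  finally show ?thesis by (simp add: power_mult_distrib)
qed

lemma summable_exp_majorant: "summable (\<lambda>n. (x::real) ^ n / fact n * c)"
  using summable_mult2[OF summable_exp_generic[of x]] by (simp add: divide_inverse_commute)

lemma summable_comparison_test_complete:
  fixes f :: "nat \<Rightarrow> 'a::{real_normed_vector,complete_space}"
  assumes f: "\<And>n. norm (f n) \<le> g n" and g: "summable g"
  shows "summable f"
proof -
  have "Cauchy (\<lambda>n. \<Sum>i<n. f i)"
  proof (rule metric_CauchyI)
    fix e :: real assume "0 < e"
    then obtain N where N: "\<And>m n. m \<ge> N \<Longrightarrow> norm (sum g {m..<n}) < e"
      using g summable_Cauchy by blast
    have less: "dist (\<Sum>i<m. f i) (\<Sum>i<n. f i) < e" if "N \<le> m" "m \<le> n" for m n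
    proof -
      have "(\<Sum>i<n. f i) = (\<Sum>i<m. f i) + sum f {m..<n}"
        using sum.atLeastLessThan_concat[of 0 m n f] that by (simp add: lessThan_atLeast0)
      then have "dist (\<Sum>i<m. f i) (\<Sum>i<n. f i) = norm (sum f {m..<n})"
        by (simp add: dist_norm norm_minus_commute)
      also have "\<dots> \<le> sum g {m..<n}" by (rule sum_norm_le) (rule f)
      also have "\<dots> < e" using N[OF that(1), of n] by simp
      finally show ?thesis .
    qed
    show "\<exists>M. \<forall>m\<ge>M. \<forall>n\<ge>M. dist (\<Sum>i<m. f i) (\<Sum>i<n. f i) < e"
      using less by (metis dist_commute nle_le)
  qed
  then show ?thesis using Cauchy_convergent_iff summable_iff_convergent by blast
qed

lemma summable_exp_series:
  fixes w :: "nat \<Rightarrow> 'a::{real_normed_vector,complete_space}"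
  assumes "\<And>n. norm (w n) \<le> K ^ n * c" and "K \<ge> 0"
  shows "summable (\<lambda>n. ((- s) ^ n / fact n) *\<^sub>R w n)"
  by (rule summable_comparison_test_complete[OF _ summable_exp_majorant[of "\<bar>s\<bar> * K" c]])
     (rule norm_exp_series_term_le[OF assms(1,2) order_refl])

lemma exp_coeff_has_real_derivative:
  "((\<lambda>x. (- x) ^ Suc n / fact (Suc n)) has_real_derivative - ((- x) ^ n / fact n)) (at x)"
proof -
  have "((\<lambda>x. (- x) ^ m / fact m) has_real_derivative (of_nat m * (- x) ^ (m - 1) * (-1)) / fact m) (at x)"
    for m by (auto intro!: derivative_eq_intros)
  note this[of "Suc n"]
  moreover have "(of_nat (Suc n) * (- x) ^ (Suc n - 1) * (-1)) / fact (Suc n)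
      = of_nat (Suc n) * ((- x) ^ n * (-1)) / (of_nat (Suc n) * fact n)"
    by (simp only: diff_Suc_1 fact_Suc mult.assoc)
  ultimately show ?thesis by simp
qed

lemma uniform_limit_exp_series:
  fixes w :: "nat \<Rightarrow> 'a::banach"
  assumes w: "\<And>n. norm (w n) \<le> K ^ n * c" and K: "K \<ge> 0"
  shows "uniform_limit (ball 0 R) (\<lambda>m x. \<Sum>j<m. ((- x) ^ j / fact j) *\<^sub>R w j)
           (\<lambda>x. \<Sum>n. ((- x) ^ n / fact n) *\<^sub>R w n) sequentially"
proof (rule Weierstrass_m_test[where M = "\<lambda>j. (R * K) ^ j / fact j * c"])
  show "norm (((- x) ^ n / fact n) *\<^sub>R w n) \<le> (R * K) ^ n / fact n * c" if "x \<in> ball 0 R" for n x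
    using that by (intro norm_exp_series_term_le[OF w K]) (simp add: dist_real_def)
qed (rule summable_exp_majorant)

lemma exp_series_derivative_uniform:
  fixes w :: "nat \<Rightarrow> 'a::banach"
  assumes w: "\<And>n. norm (w n) \<le> K ^ n * c" and K: "K \<ge> 0" and e: "e > 0"
  shows "\<forall>\<^sub>F n in sequentially. \<forall>x\<in>ball 0 R. \<forall>h.
    norm ((\<Sum>i<n. h *\<^sub>R ((case i of 0 \<Rightarrow> 0 | Suc m \<Rightarrow> - ((- x) ^ m / fact m)) *\<^sub>R w i))
      - h *\<^sub>R - (\<Sum>n. ((- x) ^ n / fact n) *\<^sub>R w (Suc n))) \<le> e * norm h"
proof -
  let ?F = "\<lambda>x. \<Sum>n. ((- x) ^ n / fact n) *\<^sub>R w (Suc n)"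
  have "norm (w (Suc n)) \<le> K ^ n * (K * c)" for n using w[of "Suc n"] by (simp add: ac_simps)
  from uniform_limitD[OF uniform_limit_exp_series[OF this K] e]
  obtain N where N: "\<And>m x. m \<ge> N \<Longrightarrow> x \<in> ball 0 R \<Longrightarrow>
      norm ((\<Sum>j<m. ((- x) ^ j / fact j) *\<^sub>R w (Suc j)) - ?F x) < e"
    unfolding eventually_sequentially dist_norm by blast
  show ?thesis unfolding eventually_sequentially
  proof (intro exI[of _ "Suc N"] allI impI ballI)
    fix n and x h :: real assume "Suc N \<le> n" and x: "x \<in> ball 0 R"
    then obtain m where m: "n = Suc m" "m \<ge> N" by (cases n) auto
    have "(\<Sum>i<n. h *\<^sub>R ((case i of 0 \<Rightarrow> 0 | Suc m \<Rightarrow> - ((- x) ^ m / fact m)) *\<^sub>R w i))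
        = - (h *\<^sub>R (\<Sum>j<m. ((- x) ^ j / fact j) *\<^sub>R w (Suc j)))"
      unfolding m(1) by (simp only: sum.lessThan_Suc_shift) (simp add: scaleR_sum_right sum_negf)
    then have "norm ((\<Sum>i<n. h *\<^sub>R ((case i of 0 \<Rightarrow> 0 | Suc m \<Rightarrow> - ((- x) ^ m / fact m)) *\<^sub>R w i))
        - h *\<^sub>R - ?F x) = \<bar>h\<bar> * norm ((\<Sum>j<m. ((- x) ^ j / fact j) *\<^sub>R w (Suc j)) - ?F x)"
      by (simp only: minus_diff_minus scaleR_diff_right[symmetric] norm_scaleR real_norm_def
          scaleR_minus_right[symmetric] norm_minus_cancel norm_minus_commute[of "?F x"])
    also have "\<dots> \<le> \<bar>h\<bar> * e" using N[OF m(2) x] by (simp add: mult_left_mono)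
    finally show "norm ((\<Sum>i<n. h *\<^sub>R ((case i of 0 \<Rightarrow> 0 | Suc m \<Rightarrow> - ((- x) ^ m / fact m)) *\<^sub>R w i))
        - h *\<^sub>R - ?F x) \<le> e * norm h"
      by (simp add: mult.commute)
  qed
qed

lemma exp_series_has_vector_derivative:
  fixes w :: "nat \<Rightarrow> 'a::banach"
  assumes w: "\<And>n. norm (w n) \<le> K ^ n * c" and K: "K \<ge> 0"
  shows "((\<lambda>s. \<Sum>n. ((- s) ^ n / fact n) *\<^sub>R w n) has_vector_derivative
           - (\<Sum>n. ((- s) ^ n / fact n) *\<^sub>R w (Suc n))) (at s)"
proof -
  define S where "S = ball (0::real) (\<bar>s\<bar> + 1)"
  define f where "f n x = ((- x) ^ n / fact n) *\<^sub>R w n" for n x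
  define df where "df n x = (case n of 0 \<Rightarrow> 0 | Suc m \<Rightarrow> - ((- x) ^ m / fact m))" for n and x :: real
  define F' where "F' x = (\<Sum>n. ((- x) ^ n / fact n) *\<^sub>R w (Suc n))" for x
  have S: "convex S" "open S" "s \<in> S" by (simp_all add: S_def)
  have f_deriv: "(f n has_derivative (\<lambda>h. h *\<^sub>R (df n x *\<^sub>R w n))) (at x within S)" for n x
  proof -
    have coeff: "((\<lambda>x. (- x) ^ n / fact n) has_real_derivative df n x) (at x)"
      using exp_coeff_has_real_derivative by (cases n) (simp_all add: df_def)
    have "(f n has_vector_derivative df n x *\<^sub>R w n) (at x within S)"
      unfolding f_def
      using has_vector_derivative_scaleR[OF has_field_derivative_at_within[OF coeff]
          has_vector_derivative_const[of "w n"]] by simp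
    then show ?thesis by (simp add: has_vector_derivative_def)
  qed
  have "\<forall>\<^sub>F n in sequentially. \<forall>x\<in>S. \<forall>h.
      norm ((\<Sum>i<n. h *\<^sub>R (df i x *\<^sub>R w i)) - h *\<^sub>R (- F' x)) \<le> e * norm h" if "e > 0" for e
    unfolding S_def df_def F'_def by (rule exp_series_derivative_uniform[OF w K that])
  moreover have "(\<lambda>n. f n s) sums (\<Sum>n. ((- s) ^ n / fact n) *\<^sub>R w n)"
    unfolding f_def by (rule summable_sums[OF summable_exp_series[OF w K]])
  ultimately have "\<exists>g. \<forall>x\<in>S. (\<lambda>n. f n x) sums g x \<and> (g has_derivative (\<lambda>h. h *\<^sub>R (- F' x))) (at x within S)"
    by (intro has_derivative_series[OF S(1) f_deriv _ S(3)])
  then obtain g where g: "\<And>x. x \<in> S \<Longrightarrow> (\<lambda>n. f n x) sums g x \<and>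
      (g has_derivative (\<lambda>h. h *\<^sub>R (- F' x))) (at x within S)"
    by blast
  have "(g has_derivative (\<lambda>h. h *\<^sub>R (- F' s))) (at s)"
    using g[OF S(3)] at_within_open[OF S(3,2)] by simp
  then have "((\<lambda>s. \<Sum>n. f n s) has_derivative (\<lambda>h. h *\<^sub>R (- F' s))) (at s)"
    by (rule has_derivative_transform_within_open[OF _ S(2,3)]) (use g sums_unique in metis)
  then show ?thesis by (simp add: has_vector_derivative_def F'_def f_def)
qed

lemma norm_blinfun_inner_right: "norm (blinfun_inner_right x) = norm x"
proof (cases "x = 0")
  case False
  show ?thesis
  proof (rule norm_blinfun_eqI)
    show "norm x \<le> norm (blinfun_inner_right x x) / norm x"
      using False by (simp add: power2_norm_eq_inner[symmetric] power2_eq_square)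
    show "norm (blinfun_inner_right x y) \<le> norm x * norm y" for y
      by (simp add: Cauchy_Schwarz_ineq2)
  qed simp
qed (simp add: blinfun_eqI)

lemmas linear_blinfun_inner_right = bounded_linear.linear[OF bounded_linear_blinfun_inner_right]

lemma has_vector_derivative_blinfun_inner_rightD:
  fixes f :: "real \<Rightarrow> 'a::real_inner"
  assumes "((\<lambda>t. blinfun_inner_right (f t)) has_vector_derivative blinfun_inner_right d) (at s)"
  shows "(f has_vector_derivative d) (at s)"
proof -
  have "blinfun_inner_right (f (s + h)) - blinfun_inner_right (f s) - h *\<^sub>R blinfun_inner_right d
      = blinfun_inner_right (f (s + h) - f s - h *\<^sub>R d)" for h
    by (rule blinfun_eqI) (simp add: inner_diff_left blinfun.diff_left blinfun.scaleR_left)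
  then have "norm (blinfun_inner_right (f (s + h)) - blinfun_inner_right (f s) - h *\<^sub>R blinfun_inner_right d)
      = norm (f (s + h) - f s - h *\<^sub>R d)" for h
    by (simp only: norm_blinfun_inner_right)
  with assms show ?thesis
    unfolding has_vector_derivative_def has_derivative_at by (simp add: bounded_linear_scaleR_left)
qed

lemma summable_semigroup_op_series:
  fixes G :: "'a::{real_normed_vector,complete_space} \<Rightarrow> 'a"
  assumes "bounded_linear G"
  shows "summable (\<lambda>n. ((- s) ^ n / fact n) *\<^sub>R (G ^^ n) v)"
proof -
  obtain K where "K \<ge> 0" "\<And>n. norm ((G ^^ n) v) \<le> K ^ n * norm v"
    using bounded_linear_funpow_bound[OF assms] by metis
  then show ?thesis by (rule summable_exp_series[rotated])
qed

text \<open>The ambient space is only of sort \<open>{real_inner, complete_space}\<close>, not \<^class>\<open>banach\<close>,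
  so the series is differentiated after the isometric embedding \<^const>\<open>blinfun_inner_right\<close>
  into the Banach space \<^typ>\<open>'a \<Rightarrow>\<^sub>L real\<close>.\<close>

lemma semigroup_op_has_vector_derivative:
  fixes G :: "'a::{real_inner,complete_space} \<Rightarrow> 'a"
  assumes G: "bounded_linear G"
  shows "((\<lambda>s. semigroup_op G s v) has_vector_derivative - semigroup_op G s (G v)) (at s)"
proof -
  let ?J = "blinfun_inner_right :: 'a \<Rightarrow> _"
  obtain K where K: "K \<ge> 0" "\<And>n v. norm ((G ^^ n) v) \<le> K ^ n * norm v"
    using bounded_linear_funpow_bound[OF G] by metis
  have J_series: "?J (semigroup_op G x u) = (\<Sum>n. ((- x) ^ n / fact n) *\<^sub>R ?J ((G ^^ n) u))" for x u
    unfolding semigroup_op_def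
    using bounded_linear.suminf[OF bounded_linear_blinfun_inner_right summable_semigroup_op_series[OF G]]
    by (simp add: linear_scale[OF linear_blinfun_inner_right])
  have "norm (?J ((G ^^ n) v)) \<le> K ^ n * norm v" for n
    unfolding norm_blinfun_inner_right by (rule K(2))
  from exp_series_has_vector_derivative[OF this K(1)]
  have "((\<lambda>s. ?J (semigroup_op G s v)) has_vector_derivative - ?J (semigroup_op G s (G v))) (at s)"
    unfolding J_series by (simp add: funpow_swap1)
  then show ?thesis
    by (intro has_vector_derivative_blinfun_inner_rightD)
       (simp add: linear_neg[OF linear_blinfun_inner_right])
qed

lemma linear_funpow: "linear (G :: 'a::real_vector \<Rightarrow> 'a) \<Longrightarrow> linear (G ^^ n)"
  by (induction n) (auto simp: linear_compose id_def[symmetric] linear_id)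

lemma linear_semigroup_op:
  fixes G :: "'a::{real_normed_vector,complete_space} \<Rightarrow> 'a"
  assumes G: "bounded_linear G"
  shows "linear (semigroup_op G s)"
proof (rule linearI)
  note summable = summable_semigroup_op_series[OF G]
  note lin = linear_funpow[OF bounded_linear.linear[OF G]]
  show "semigroup_op G s (x + y) = semigroup_op G s x + semigroup_op G s y" for x y
    unfolding semigroup_op_def suminf_add[OF summable summable]
    by (simp add: linear_add[OF lin] scaleR_add_right)
  show "semigroup_op G s (c *\<^sub>R x) = c *\<^sub>R semigroup_op G s x" for c x
  proof -
    have "(\<lambda>n. ((- s) ^ n / fact n) *\<^sub>R (G ^^ n) (c *\<^sub>R x))
        = (\<lambda>n. c *\<^sub>R (((- s) ^ n / fact n) *\<^sub>R (G ^^ n) x))"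
      by (simp add: linear_scale[OF lin] mult.commute)
    then show ?thesis by (simp add: semigroup_op_def suminf_scaleR_right[OF summable])
  qed
qed

lemma semigroup_op_commute:
  fixes G :: "'a::{real_normed_vector,complete_space} \<Rightarrow> 'a"
  assumes G: "bounded_linear G"
  shows "G (semigroup_op G s x) = semigroup_op G s (G x)"
  unfolding semigroup_op_def
  using bounded_linear.suminf[OF G summable_semigroup_op_series[OF G]]
    linear_scale[OF bounded_linear.linear[OF G]]
  by (simp add: funpow_swap1)

lemma semigroup_op_fixed:
  fixes G Q :: "'a::{real_normed_vector,complete_space} \<Rightarrow> 'a"
  assumes G: "bounded_linear G" and Q: "bounded_linear Q"
    and QG: "\<And>x. Q (G x) = G x" and Qv: "Q v = v"
  shows "Q (semigroup_op G s v) = semigroup_op G s v"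
proof -
  have "Q ((G ^^ n) v) = (G ^^ n) v" for n
    by (cases n) (auto simp: Qv QG)
  then show ?thesis
    unfolding semigroup_op_def
    using bounded_linear.suminf[OF Q summable_semigroup_op_series[OF G]]
      linear_scale[OF bounded_linear.linear[OF Q]]
    by simp
qed

lemma semigroup_op_zero [simp]: "semigroup_op G 0 v = v"
proof -
  have "(\<lambda>n. ((- 0::real) ^ n / fact n) *\<^sub>R (G ^^ n) v) = (\<lambda>n. if n = 0 then (G ^^ n) v else 0)"
    by auto
  then show ?thesis
    unfolding semigroup_op_def using sums_single[of 0 "\<lambda>n. (G ^^ n) v"] sums_unique by fastforce
qed

lemma has_real_derivative_inner_self:
  assumes "(u has_vector_derivative u') (at t)"
  shows "((\<lambda>t. inner (u t) (u t)) has_real_derivative 2 * inner (u t) u') (at t)"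
proof -
  have "((\<lambda>t. inner (u t) (u t)) has_derivative (\<lambda>h. inner (u t) (h *\<^sub>R u') + inner (h *\<^sub>R u') (u t))) (at t)"
    using has_derivative_inner[OF assms[unfolded has_vector_derivative_def] assms[unfolded has_vector_derivative_def]] .
  moreover have "(\<lambda>h. inner (u t) (h *\<^sub>R u') + inner (h *\<^sub>R u') (u t)) = (*) (2 * inner (u t) u')"
    by (auto simp: inner_commute algebra_simps)
  ultimately show ?thesis by (simp add: has_field_derivative_def)
qed

section \<open>Accretive operators on finite-dimensional subspaces\<close>

lemma linear_inj_on_imp_surj_on_finite_span:
  fixes g :: "'a::real_vector \<Rightarrow> 'a"
  assumes lin: "linear g" and V: "V = span B" "finite B" and gV: "\<And>v. v \<in> V \<Longrightarrow> g v \<in> V"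
    and inj: "inj_on g V" and y: "y \<in> V"
  shows "\<exists>x\<in>V. g x = y"
proof -
  obtain B0 where B0: "B0 \<subseteq> V" "independent B0" "V \<subseteq> span B0" "card B0 = dim V"
    by (rule basis_exists)
  have fB0: "finite B0" using independent_span_bound[OF V(2) B0(2)] B0(1) V(1) by blast
  have sB0: "span B0 = V"
    using B0(1,3) V(1) by (metis span_minimal subspace_span subset_antisym)
  define C where "C = g ` B0"
  have indC: "independent C"
    unfolding C_def by (rule linear_independent_injective_image[OF lin B0(2)]) (use inj sB0 in simp)
  have cC: "card C = card B0" unfolding C_def by (rule card_image) (use inj B0(1) inj_on_subset in blast)
  have "y \<in> span C"
  proof (rule ccontr)
    assume ny: "y \<notin> span C"
    have "insert y C \<subseteq> span B0" using gV B0(1,3) y C_def by auto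
    from independent_span_bound[OF fB0 independent_insertI[OF ny indC] this]
    have "card (insert y C) \<le> card B0" by simp
    moreover have "y \<notin> C" using ny span_base by blast
    ultimately show False using cC fB0 C_def by simp
  qed
  then have "y \<in> g ` span B0" unfolding C_def using span_linear_image[OF lin] by blast
  then show ?thesis using sB0 by auto
qed

lemma lin_on_add: "lin_on V T \<Longrightarrow> x \<in> V \<Longrightarrow> y \<in> V \<Longrightarrow> T (x + y) = T x + T y"
  by (simp add: lin_on_def)

lemma lin_on_scale: "lin_on V T \<Longrightarrow> x \<in> V \<Longrightarrow> T (c *\<^sub>R x) = c *\<^sub>R T x"
  by (simp add: lin_on_def)

lemma lin_on_subspace: "lin_on V T \<Longrightarrow> subspace V"
  by (simp add: lin_on_def)

lemma lin_on_diff: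
  assumes T: "lin_on V T" and "x \<in> V" "y \<in> V"
  shows "T (x - y) = T x - T y"
proof -
  have "x - y \<in> V" using assms subspace_diff[OF lin_on_subspace[OF T]] by blast
  then have "T x = T (x - y) + T y" using lin_on_add[OF T, of "x - y" y] assms by simp
  then show ?thesis by simp
qed

definition accretive_on :: "'a::real_inner set \<Rightarrow> ('a \<Rightarrow> 'a) \<Rightarrow> bool" where
  "accretive_on V T \<longleftrightarrow> lin_on V T \<and> (\<forall>v\<in>V. T v \<in> V) \<and> (\<forall>v\<in>V. inner (T v) v \<ge> 0)"

lemma shift_inv_eq:
  assumes T: "accretive_on V T" and "\<tau> \<ge> 0" and w: "w \<in> V" and e: "w + \<tau> *\<^sub>R T w = v"
  shows "shift_inv V T \<tau> v = w"
  unfolding shift_inv_def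
proof (rule the_equality)
  fix w' assume w': "w' \<in> V \<and> w' + \<tau> *\<^sub>R T w' = v"
  have d: "w' - w \<in> V"
    using T w w' subspace_diff unfolding accretive_on_def lin_on_def by blast
  have "T (w' - w) = T w' - T w" using T w w' lin_on_diff unfolding accretive_on_def by blast
  then have "(w' - w) + \<tau> *\<^sub>R T (w' - w) = (w' + \<tau> *\<^sub>R T w') - (w + \<tau> *\<^sub>R T w)"
    by (simp add: scaleR_diff_right)
  then have "(w' - w) + \<tau> *\<^sub>R T (w' - w) = 0" using w' e by simp
  then have "0 = inner ((w' - w) + \<tau> *\<^sub>R T (w' - w)) (w' - w)" by simp
  also have "\<dots> = inner (w' - w) (w' - w) + \<tau> * inner (T (w' - w)) (w' - w)"
    by (simp add: inner_add_left)
  also have "\<dots> \<ge> inner (w' - w) (w' - w)"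
    using T d \<open>\<tau> \<ge> 0\<close> unfolding accretive_on_def by simp
  finally have "inner (w' - w) (w' - w) \<le> 0" .
  then show "w' = w" using inner_ge_zero[of "w' - w"] by simp
qed (use w e in simp)

lemma norm_le_norm_add_accretive:
  assumes T: "accretive_on V T" and "\<tau> \<ge> 0" and w: "w \<in> V"
  shows "norm w \<le> norm (w + \<tau> *\<^sub>R T w)"
proof -
  have "(norm w)\<^sup>2 = inner (w + \<tau> *\<^sub>R T w) w - \<tau> * inner (T w) w"
    unfolding power2_norm_eq_inner by (simp add: inner_add_left)
  also have "\<dots> \<le> inner (w + \<tau> *\<^sub>R T w) w" using T w \<open>\<tau> \<ge> 0\<close> unfolding accretive_on_def by simp
  also have "\<dots> \<le> norm (w + \<tau> *\<^sub>R T w) * norm w" by (rule norm_cauchy_schwarz)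
  finally show ?thesis by (cases "norm w = 0") (simp_all add: power2_eq_square)
qed

lemma inv_op_eq:
  assumes "inj_on T V" "x \<in> V" "T x = y"
  shows "inv_op V T y = x"
  unfolding inv_op_def using assms by (auto dest: inj_onD)

locale finite_projection =
  fixes V :: "'a::{real_inner,complete_space} set" and P :: "'a \<Rightarrow> 'a"
  assumes bounded_linear_P: "bounded_linear P" and P_in: "\<And>x. P x \<in> V"
    and P_id: "\<And>v. v \<in> V \<Longrightarrow> P v = v" and finite_span: "\<exists>B. finite B \<and> V = span B"
begin

lemma subspace_V: "subspace V"
  using finite_span subspace_span by blast

lemma linear_P: "linear P"
  using bounded_linear_P bounded_linear.linear by blast

lemma linear_lin_on_comp_P: "lin_on V T \<Longrightarrow> linear (\<lambda>x. T (P x))"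
  by (rule linearI) (simp_all add: linear_add[OF linear_P] linear_scale[OF linear_P] lin_on_add lin_on_scale P_in)

lemma lin_on_surj_on:
  assumes T: "lin_on V T" "\<And>v. v \<in> V \<Longrightarrow> T v \<in> V" and inj: "inj_on T V" and y: "y \<in> V"
  obtains x where "x \<in> V" "T x = y"
proof -
  have "linear (\<lambda>x. T (P x))" by (rule linear_lin_on_comp_P[OF T(1)])
  moreover have "inj_on (\<lambda>x. T (P x)) V" "\<And>v. v \<in> V \<Longrightarrow> T (P v) \<in> V"
    using inj T(2) by (auto simp: P_id inj_on_def)
  moreover obtain B where "V = span B" "finite B" using finite_span by blast
  ultimately obtain x where "x \<in> V" "T (P x) = y"
    using linear_inj_on_imp_surj_on_finite_span[OF _ _ _ _ _ y] by blast
  then show thesis using that P_id by simp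
qed

lemma inv_op_props:
  assumes T: "lin_on V T" "\<And>v. v \<in> V \<Longrightarrow> T v \<in> V" and inj: "inj_on T V" and y: "y \<in> V"
  shows "inv_op V T y \<in> V" "T (inv_op V T y) = y"
proof -
  obtain x where "x \<in> V" "T x = y" using lin_on_surj_on[OF T inj y] .
  moreover from this have "inv_op V T y = x" by (rule inv_op_eq[OF inj])
  ultimately show "inv_op V T y \<in> V" "T (inv_op V T y) = y" by simp_all
qed

context
  fixes T :: "'a \<Rightarrow> 'a" and \<tau> :: real
  assumes T: "accretive_on V T" and \<tau>: "\<tau> \<ge> 0"
begin

lemma shift_inv_props:
  assumes v: "v \<in> V"
  shows "shift_inv V T \<tau> v \<in> V" "shift_inv V T \<tau> v + \<tau> *\<^sub>R T (shift_inv V T \<tau> v) = v"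
proof -
  let ?S = "\<lambda>w. w + \<tau> *\<^sub>R T w"
  have lin: "lin_on V T" and TV: "\<And>v. v \<in> V \<Longrightarrow> T v \<in> V"
    using T by (simp_all add: accretive_on_def)
  have "lin_on V ?S"
    using lin subspace_V by (simp add: lin_on_def algebra_simps)
  moreover have "?S w \<in> V" if "w \<in> V" for w
    using that TV subspace_V by (simp add: subspace_add subspace_scale)
  moreover have "inj_on ?S V"
  proof (rule inj_onI)
    fix x y assume x: "x \<in> V" and y: "y \<in> V" and eq: "?S x = ?S y"
    have "x = shift_inv V T \<tau> (?S y)" using shift_inv_eq[OF T \<tau> x eq] by simp
    also have "\<dots> = y" by (rule shift_inv_eq[OF T \<tau> y refl])
    finally show "x = y" .
  qed
  ultimately obtain w where "w \<in> V" "?S w = v" by (rule lin_on_surj_on[OF _ _ _ v])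
  moreover from this have "shift_inv V T \<tau> v = w" by (rule shift_inv_eq[OF T \<tau>])
  ultimately show "shift_inv V T \<tau> v \<in> V" "?S (shift_inv V T \<tau> v) = v" by simp_all
qed

lemma norm_shift_inv: "v \<in> V \<Longrightarrow> norm (shift_inv V T \<tau> v) \<le> norm v"
  using norm_le_norm_add_accretive[OF T \<tau>] shift_inv_props by metis

lemma lin_on_shift_inv: "lin_on V (shift_inv V T \<tau>)"
proof -
  have lin: "lin_on V T" using T by (simp add: accretive_on_def)
  have "shift_inv V T \<tau> (a + b) = shift_inv V T \<tau> a + shift_inv V T \<tau> b" if "a \<in> V" "b \<in> V" for a b
    using shift_inv_props[OF that(1)] shift_inv_props[OF that(2)] subspace_V
    by (intro shift_inv_eq[OF T \<tau>])
       (auto simp: lin_on_add[OF lin] subspace_add algebra_simps)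
  moreover have "shift_inv V T \<tau> (c *\<^sub>R a) = c *\<^sub>R shift_inv V T \<tau> a" if "a \<in> V" for a c
  proof (rule shift_inv_eq[OF T \<tau>])
    let ?s = "shift_inv V T \<tau> a"
    note s = shift_inv_props[OF that]
    show "c *\<^sub>R ?s \<in> V" using s subspace_V subspace_scale by blast
    have "c *\<^sub>R ?s + \<tau> *\<^sub>R T (c *\<^sub>R ?s) = c *\<^sub>R (?s + \<tau> *\<^sub>R T ?s)"
      using s(1) by (simp add: lin_on_scale[OF lin] scaleR_add_right mult.commute)
    also have "\<dots> = c *\<^sub>R a" using s(2) by simp
    finally show "c *\<^sub>R ?s + \<tau> *\<^sub>R T (c *\<^sub>R ?s) = c *\<^sub>R a" .
  qed
  ultimately show ?thesis using subspace_V by (simp add: lin_on_def)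
qed

lemma shift_inv_commute:
  assumes v: "v \<in> V"
  shows "T (shift_inv V T \<tau> v) = shift_inv V T \<tau> (T v)"
proof -
  have lin: "lin_on V T" and TV: "\<And>v. v \<in> V \<Longrightarrow> T v \<in> V"
    using T by (simp_all add: accretive_on_def)
  define w where "w = shift_inv V T \<tau> v"
  have w: "w \<in> V" "w + \<tau> *\<^sub>R T w = v" using shift_inv_props[OF v] by (simp_all add: w_def)
  have "T w + \<tau> *\<^sub>R T (T w) = T (w + \<tau> *\<^sub>R T w)"
    using w(1) TV subspace_V by (simp add: lin_on_add[OF lin] lin_on_scale[OF lin] subspace_scale)
  then have "T w + \<tau> *\<^sub>R T (T w) = T v" using w(2) by simp
  then show ?thesis unfolding w_def[symmetric] by (rule shift_inv_eq[OF T \<tau> TV[OF w(1)], symmetric])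
qed

end

end

section \<open>The splitting defect on a Galerkin space\<close>

definition splitting_defect ::
    "'a::real_normed_vector set \<Rightarrow> ('a \<Rightarrow> 'a) \<Rightarrow> ('a \<Rightarrow> 'a) \<Rightarrow> ('a \<Rightarrow> 'a) \<Rightarrow> real \<Rightarrow> 'a \<Rightarrow> 'a" where
  "splitting_defect V A A1 A2 \<tau> v =
     (let w = semigroup_op A \<tau> v - shift_inv V A2 \<tau> (shift_inv V A1 \<tau> v) in w + \<tau> *\<^sub>R A2 w)"

lemma cross_term_le:
  fixes t a b ca cb :: real
  assumes "ca > 0"
  shows "2 * t * (cb * a * b) \<le> 2 * t\<^sup>2 * (ca * b\<^sup>2) + cb\<^sup>2 / ca * a\<^sup>2"
proof -
  have "ca * (2 * t * (cb * a * b)) = 2 * (t * ca * b) * (cb * a)" by (simp add: algebra_simps)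
  also have "\<dots> \<le> 2 * (t * ca * b)\<^sup>2 + (cb * a)\<^sup>2"
    using sum_power2_ge_zero[of "t * ca * b - cb * a" "t * ca * b"] by (simp add: power2_diff)
  also have "\<dots> = ca * (2 * t\<^sup>2 * (ca * b\<^sup>2) + cb\<^sup>2 / ca * a\<^sup>2)"
    using assms by (simp add: field_simps power2_eq_square)
  finally show ?thesis using assms by simp
qed

lemma norm_add3_le: "norm (a + b + c) \<le> norm a + norm b + norm (c::'a::real_normed_vector)"
  using norm_triangle_ineq[of "a + b" c] norm_triangle_ineq[of a b] by linarith

locale galerkin_splitting = finite_projection V P
  for V :: "'a::{real_inner,complete_space} set" and P +
  fixes A A1 A2 :: "'a \<Rightarrow> 'a" and ip :: "'a \<Rightarrow> 'a \<Rightarrow> real" and ca cb ce :: real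
  assumes accretive_A1: "accretive_on V A1" and accretive_A2: "accretive_on V A2"
    and A_split: "\<And>v. v \<in> V \<Longrightarrow> A v = A1 v + A2 v"
    and inner_on_ip: "inner_on V ip"
    and ca_pos: "ca > 0" and coercive: "\<And>v. v \<in> V \<Longrightarrow> inner (A v) v \<ge> ca * (normV ip v)\<^sup>2"
    and bounded: "\<And>v w. v \<in> V \<Longrightarrow> w \<in> V \<Longrightarrow> \<bar>inner (A v) w\<bar> \<le> cb * normV ip v * normV ip w"
    and ce_nonneg: "ce \<ge> 0"
    and A1_P_bound: "\<And>x. norm (A1 (P x)) \<le> ce * norm x"
    and A2_P_bound: "\<And>x. norm (A2 (P x)) \<le> ce * norm x"
begin

lemma lin_on_A1: "lin_on V A1" and A1_in: "v \<in> V \<Longrightarrow> A1 v \<in> V"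
  and lin_on_A2: "lin_on V A2" and A2_in: "v \<in> V \<Longrightarrow> A2 v \<in> V"
  using accretive_A1 accretive_A2 by (simp_all add: accretive_on_def)

lemma A_in: "v \<in> V \<Longrightarrow> A v \<in> V"
  by (simp add: A_split A1_in A2_in subspace_add[OF subspace_V])

lemma lin_on_A: "lin_on V A"
  unfolding lin_on_def
proof (intro conjI ballI allI subspace_V)
  show "A (x + y) = A x + A y" if "x \<in> V" "y \<in> V" for x y
    using that A_split subspace_add[OF subspace_V] lin_on_add[OF lin_on_A1] lin_on_add[OF lin_on_A2]
    by (simp add: algebra_simps)
  show "A (c *\<^sub>R x) = c *\<^sub>R A x" if "x \<in> V" for c x
    using that A_split subspace_scale[OF subspace_V] lin_on_scale[OF lin_on_A1] lin_on_scale[OF lin_on_A2]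
    by (simp add: scaleR_add_right)
qed

lemma ip_self_nonneg:
  assumes "v \<in> V"
  shows "ip v v \<ge> 0"
proof (cases "v = 0")
  case True
  have "ip (0 *\<^sub>R 0) 0 = 0 * ip 0 0"
    using inner_on_ip subspace_0[OF subspace_V] unfolding inner_on_def by blast
  then show ?thesis using True by simp
next
  case False
  then show ?thesis using inner_on_ip assms unfolding inner_on_def by (simp add: less_imp_le)
qed

lemma normV_sq:
  assumes "v \<in> V"
  shows "(normV ip v)\<^sup>2 = ip v v"
  using ip_self_nonneg[OF assms] by (simp add: normV_def)

lemma A_nonneg:
  assumes "v \<in> V"
  shows "inner (A v) v \<ge> 0"
proof -
  have "0 \<le> ca * (normV ip v)\<^sup>2" using ca_pos by simp
  then show ?thesis using coercive[OF assms] by linarith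
qed

lemma inj_on_A: "inj_on A V"
proof (rule inj_onI, rule ccontr)
  fix x y assume x: "x \<in> V" and y: "y \<in> V" and "A x = A y" and "x \<noteq> y"
  have d: "x - y \<in> V" using subspace_diff[OF subspace_V x y] .
  have "A (x - y) = 0" using lin_on_diff[OF lin_on_A x y] \<open>A x = A y\<close> by simp
  then have "ca * ip (x - y) (x - y) \<le> 0" using coercive[OF d] normV_sq[OF d] by simp
  moreover have "ip (x - y) (x - y) > 0"
    using inner_on_ip d \<open>x \<noteq> y\<close> unfolding inner_on_def by simp
  ultimately show False using ca_pos by (simp add: mult_le_0_iff)
qed

lemma inv_op_A: "y \<in> V \<Longrightarrow> inv_op V A y \<in> V" "y \<in> V \<Longrightarrow> A (inv_op V A y) = y"
  using inv_op_props[OF lin_on_A A_in inj_on_A] by blast+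

lemma norm_A_P_le: "norm (A (P x)) \<le> 2 * ce * norm x"
proof -
  have "norm (A (P x)) \<le> norm (A1 (P x)) + norm (A2 (P x))"
    using A_split[OF P_in] by (simp add: norm_triangle_ineq)
  then show ?thesis using A1_P_bound[of x] A2_P_bound[of x] by simp
qed

lemma norm_A_le: "v \<in> V \<Longrightarrow> norm (A v) \<le> 2 * ce * norm v"
  using norm_A_P_le[of v] P_id by simp

lemma norm_A1_le: "v \<in> V \<Longrightarrow> norm (A1 v) \<le> ce * norm v"
  using A1_P_bound[of v] P_id by simp

lemma norm_A2_le: "v \<in> V \<Longrightarrow> norm (A2 v) \<le> ce * norm v"
  using A2_P_bound[of v] P_id by simp

text \<open>\<open>A\<close> is only given on \<open>V\<close>; its extension \<open>A \<circ> P\<close> is bounded on the whole space and has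
  the same exponential series on \<open>V\<close>.\<close>

definition A_ext :: "'a \<Rightarrow> 'a" where "A_ext x = A (P x)"

lemma bounded_linear_A_ext: "bounded_linear A_ext"
proof (rule bounded_linear_intro[where K = "2 * ce"])
  show "A_ext (x + y) = A_ext x + A_ext y" for x y
    unfolding A_ext_def linear_add[OF linear_P] by (rule lin_on_add[OF lin_on_A P_in P_in])
  show "A_ext (c *\<^sub>R x) = c *\<^sub>R A_ext x" for c x
    unfolding A_ext_def linear_scale[OF linear_P] by (rule lin_on_scale[OF lin_on_A P_in])
  show "norm (A_ext x) \<le> norm x * (2 * ce)" for x
    unfolding A_ext_def using norm_A_P_le by (simp add: mult.commute)
qed

lemma A_ext_eq: "v \<in> V \<Longrightarrow> A_ext v = A v"
  by (simp add: A_ext_def P_id)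

lemma semigroup_op_eq_ext: "v \<in> V \<Longrightarrow> semigroup_op A s v = semigroup_op A_ext s v"
proof -
  assume v: "v \<in> V"
  have "(A_ext ^^ n) v \<in> V" for n
    by (cases n) (simp_all add: v A_ext_def A_in P_in)
  then have "(A ^^ n) v = (A_ext ^^ n) v" for n
    by (induction n) (simp_all add: A_ext_eq)
  then show ?thesis unfolding semigroup_op_def by simp
qed

lemma semigroup_in: "v \<in> V \<Longrightarrow> semigroup_op A s v \<in> V"
proof -
  assume v: "v \<in> V"
  have "P (semigroup_op A_ext s v) = semigroup_op A_ext s v"
    by (rule semigroup_op_fixed[OF bounded_linear_A_ext bounded_linear_P]) (simp_all add: A_ext_def P_id P_in A_in v)
  then show ?thesis by (metis P_in semigroup_op_eq_ext v)
qed

lemma lin_on_semigroup: "lin_on V (semigroup_op A s)"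
  using linear_semigroup_op[OF bounded_linear_A_ext, of s] subspace_V
  by (simp add: lin_on_def semigroup_op_eq_ext subspace_add subspace_scale linear_add linear_scale)

lemma semigroup_commute:
  assumes v: "v \<in> V"
  shows "A (semigroup_op A s v) = semigroup_op A s (A v)"
  using semigroup_op_commute[OF bounded_linear_A_ext, of s v] semigroup_in[OF v]
  by (simp add: semigroup_op_eq_ext v A_in A_ext_eq)

lemma semigroup_has_vector_derivative:
  assumes v: "v \<in> V"
  shows "((\<lambda>s. semigroup_op A s v) has_vector_derivative - semigroup_op A s (A v)) (at s)"
  using semigroup_op_has_vector_derivative[OF bounded_linear_A_ext, of v s] v
  by (simp add: semigroup_op_eq_ext A_in A_ext_eq)

lemma norm_semigroup_le:
  assumes v: "v \<in> V" and s: "s \<ge> 0"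
  shows "norm (semigroup_op A s v) \<le> norm v"
proof -
  define \<phi> where "\<phi> t = inner (semigroup_op A t v) (semigroup_op A t v)" for t
  have "\<phi> s \<le> \<phi> 0"
  proof (rule DERIV_nonpos_imp_nonincreasing[OF s])
    fix t
    have "(\<phi> has_real_derivative - 2 * inner (A (semigroup_op A t v)) (semigroup_op A t v)) (at t)"
      using has_real_derivative_inner_self[OF semigroup_has_vector_derivative[OF v]]
      unfolding \<phi>_def by (simp add: semigroup_commute[OF v] inner_commute)
    then show "\<exists>y. (\<phi> has_real_derivative y) (at t) \<and> y \<le> 0"
      using A_nonneg[OF semigroup_in[OF v]] by force
  qed
  then have "(norm (semigroup_op A s v))\<^sup>2 \<le> (norm v)\<^sup>2" by (simp add: \<phi>_def power2_norm_eq_inner)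
  then show ?thesis by (rule power2_le_imp_le) simp
qed

lemma norm_semigroup_diff_le:
  assumes w: "w \<in> V" and s: "s \<ge> 0"
  shows "norm (semigroup_op A s w - w) \<le> s * norm (A w)"
proof -
  have "norm (semigroup_op A s w - semigroup_op A 0 w) \<le> norm (A w) * norm (s - 0)"
  proof (rule differentiable_bound[where S = "{0..s}" and f' = "\<lambda>t h. h *\<^sub>R - semigroup_op A t (A w)"])
    show "((\<lambda>t. semigroup_op A t w) has_derivative (\<lambda>h. h *\<^sub>R - semigroup_op A t (A w))) (at t within {0..s})"
      for t using semigroup_has_vector_derivative[OF w, of t]
      unfolding has_vector_derivative_def by (rule has_derivative_at_withinI)
    show "onorm (\<lambda>h. h *\<^sub>R - semigroup_op A t (A w)) \<le> norm (A w)" if "t \<in> {0..s}" for t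
    proof (rule onorm_bound)
      have "norm (semigroup_op A t (A w)) \<le> norm (A w)"
        using norm_semigroup_le[OF A_in[OF w]] that by simp
      then show "norm (h *\<^sub>R - semigroup_op A t (A w)) \<le> norm (A w) * norm h" for h
        by (simp add: mult.commute mult_left_mono)
    qed simp
  qed (use s in auto)
  then show ?thesis using s by (simp add: mult.commute)
qed

lemma smoothing_dissipation:
  assumes u: "u \<in> V" and t: "t \<ge> 0"
  shows "2 * t * inner (A u) (A u) \<le> 2 * t\<^sup>2 * inner (A (A u)) (A u) + cb\<^sup>2 / ca\<^sup>2 * inner (A u) u"
proof -
  have "inner (A u) (A u) \<le> cb * normV ip u * normV ip (A u)"
    using bounded[OF u A_in[OF u]] by simp
  then have "2 * t * inner (A u) (A u) \<le> 2 * t * (cb * normV ip u * normV ip (A u))"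
    using t by (simp add: mult_left_mono)
  also have "\<dots> \<le> 2 * t\<^sup>2 * (ca * (normV ip (A u))\<^sup>2) + cb\<^sup>2 / ca * (normV ip u)\<^sup>2"
    by (rule cross_term_le[OF ca_pos])
  also have "\<dots> = 2 * t\<^sup>2 * (ca * (normV ip (A u))\<^sup>2) + cb\<^sup>2 / ca\<^sup>2 * (ca * (normV ip u)\<^sup>2)"
    using ca_pos by (simp add: power2_eq_square)
  also have "\<dots> \<le> 2 * t\<^sup>2 * inner (A (A u)) (A u) + cb\<^sup>2 / ca\<^sup>2 * inner (A u) u"
    using coercive[OF u] coercive[OF A_in[OF u]] by (intro add_mono mult_left_mono) auto
  finally show ?thesis .
qed

text \<open>Coercivity and boundedness of \<open>A\<close> in the \<open>V\<close>-norm make the Lyapunov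
  function \<open>t\<^sup>2 \<parallel>A e\<^sup>-\<^sup>t\<^sup>A v\<parallel>\<^sup>2 + K \<parallel>e\<^sup>-\<^sup>t\<^sup>A v\<parallel>\<^sup>2\<close> nonincreasing
  for \<open>K = cb\<^sup>2 / (2 ca\<^sup>2)\<close>.\<close>

lemma semigroup_smoothing:
  assumes v: "v \<in> V" and s: "s \<ge> 0"
  shows "s * norm (A (semigroup_op A s v)) \<le> \<bar>cb\<bar> / ca * norm v"
proof -
  define K where "K = cb\<^sup>2 / (2 * ca\<^sup>2)"
  define \<psi> where "\<psi> t = t\<^sup>2 * inner (A (semigroup_op A t v)) (A (semigroup_op A t v))
    + K * inner (semigroup_op A t v) (semigroup_op A t v)" for t :: real
  have "\<psi> s \<le> \<psi> 0"
  proof (rule DERIV_nonpos_imp_nonincreasing[OF s])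
    fix t :: real assume t: "0 \<le> t"
    define u where "u = semigroup_op A t v"
    have u: "u \<in> V" unfolding u_def by (rule semigroup_in[OF v])
    have du: "((\<lambda>t. semigroup_op A t v) has_vector_derivative - A u) (at t)"
      using semigroup_has_vector_derivative[OF v] by (simp add: u_def semigroup_commute[OF v])
    have dAu: "((\<lambda>t. A (semigroup_op A t v)) has_vector_derivative - A (A u)) (at t)"
      using semigroup_has_vector_derivative[OF A_in[OF v]]
      by (simp add: u_def semigroup_commute[OF v] semigroup_commute[OF A_in[OF v]])
    have dt: "((\<lambda>t. t\<^sup>2) has_real_derivative 2 * t) (at t)"
      by (auto intro!: derivative_eq_intros)
    have "(\<psi> has_real_derivative
        2 * t * inner (A u) (A u) - 2 * t\<^sup>2 * inner (A (A u)) (A u) - 2 * K * inner (A u) u) (at t)"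
      using DERIV_add[OF DERIV_mult[OF dt has_real_derivative_inner_self[OF dAu]]
          DERIV_cmult[OF has_real_derivative_inner_self[OF du], of K]]
      unfolding \<psi>_def u_def[symmetric] by (simp add: algebra_simps inner_commute)
    moreover have "2 * K = cb\<^sup>2 / ca\<^sup>2" by (simp add: K_def)
    ultimately show "\<exists>y. (\<psi> has_real_derivative y) (at t) \<and> y \<le> 0"
      using smoothing_dissipation[OF u t] by force
  qed
  moreover have "(s * norm (A (semigroup_op A s v)))\<^sup>2 \<le> \<psi> s"
    unfolding \<psi>_def using K_def by (simp add: power_mult_distrib power2_norm_eq_inner)
  moreover have "\<psi> 0 \<le> (\<bar>cb\<bar> / ca * norm v)\<^sup>2"
  proof -
    have "K \<le> (cb / ca)\<^sup>2"
      unfolding K_def power_divide by (rule divide_left_mono) (use ca_pos in auto)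
    have "\<psi> 0 = K * (norm v)\<^sup>2" by (simp add: \<psi>_def power2_norm_eq_inner)
    also have "\<dots> \<le> (cb / ca)\<^sup>2 * (norm v)\<^sup>2" by (rule mult_right_mono) (fact, simp)
    also have "\<dots> = (\<bar>cb\<bar> / ca * norm v)\<^sup>2" by (simp add: power_mult_distrib power_divide)
    finally show ?thesis .
  qed
  ultimately have "(s * norm (A (semigroup_op A s v)))\<^sup>2 \<le> (\<bar>cb\<bar> / ca * norm v)\<^sup>2" by linarith
  then show ?thesis by (rule power2_le_imp_le) (use ca_pos in simp)
qed

lemma norm_sq_le_inv_op:
  assumes v: "v \<in> V"
  shows "(norm v)\<^sup>2 \<le> (cb / ca)\<^sup>2 * (norm (inv_op V A v) * norm (A v))"
proof (cases "v = 0")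
  case False
  define w where "w = inv_op V A v"
  have w: "w \<in> V" "A w = v" using inv_op_A[OF v] unfolding w_def by auto
  define a where "a = normV ip w"
  define b where "b = normV ip v"
  have h1: "(norm v)\<^sup>2 \<le> cb * a * b"
    using bounded[OF w(1) v] w(2) unfolding a_def b_def by (simp add: power2_norm_eq_inner)
  have h2: "ca * a\<^sup>2 \<le> norm v * norm w"
    using coercive[OF w(1)] w(2) Cauchy_Schwarz_ineq2[of v w] unfolding a_def by simp
  have h3: "ca * b\<^sup>2 \<le> norm (A v) * norm v"
    using coercive[OF v] Cauchy_Schwarz_ineq2[of "A v" v] unfolding b_def by simp
  have "ca\<^sup>2 * ((norm v)\<^sup>2)\<^sup>2 \<le> ca\<^sup>2 * (cb * a * b)\<^sup>2"
    using h1 by (intro mult_left_mono power_mono) simp_all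
  also have "\<dots> = cb\<^sup>2 * ((ca * a\<^sup>2) * (ca * b\<^sup>2))"
    by (simp add: power_mult_distrib power2_eq_square)
  also have "\<dots> \<le> cb\<^sup>2 * ((norm v * norm w) * (norm (A v) * norm v))"
    using ca_pos by (intro mult_left_mono mult_mono[OF h2 h3]) auto
  finally have "ca\<^sup>2 * (norm v)\<^sup>2 * (norm v)\<^sup>2 \<le> cb\<^sup>2 * (norm w * norm (A v)) * (norm v)\<^sup>2"
    by (simp add: power2_eq_square algebra_simps)
  then have "ca\<^sup>2 * (norm v)\<^sup>2 \<le> cb\<^sup>2 * (norm w * norm (A v))"
    using False by simp
  then show ?thesis
    using ca_pos unfolding w_def by (simp add: power_divide field_simps)
qed simp

lemma splitting_defect_eq:
  assumes v: "v \<in> V" and \<tau>: "\<tau> \<ge> 0"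
  shows "splitting_defect V A A1 A2 \<tau> v
    = semigroup_op A \<tau> v + \<tau> *\<^sub>R A2 (semigroup_op A \<tau> v) - shift_inv V A1 \<tau> v"
proof -
  define r where "r = shift_inv V A1 \<tau> v"
  have r: "r \<in> V" using shift_inv_props[OF accretive_A1 \<tau> v] by (simp add: r_def)
  define q where "q = shift_inv V A2 \<tau> r"
  have q: "q \<in> V" "q + \<tau> *\<^sub>R A2 q = r" using shift_inv_props[OF accretive_A2 \<tau> r] by (simp_all add: q_def)
  have E: "semigroup_op A \<tau> v \<in> V" by (rule semigroup_in[OF v])
  have "(semigroup_op A \<tau> v - q) + \<tau> *\<^sub>R A2 (semigroup_op A \<tau> v - q)
      = semigroup_op A \<tau> v + \<tau> *\<^sub>R A2 (semigroup_op A \<tau> v) - (q + \<tau> *\<^sub>R A2 q)"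
    by (simp add: lin_on_diff[OF lin_on_A2 E q(1)] algebra_simps)
  then show ?thesis unfolding splitting_defect_def Let_def r_def[symmetric] q_def[symmetric] q(2) .
qed

lemma lin_on_splitting_defect:
  assumes \<tau>: "\<tau> \<ge> 0"
  shows "lin_on V (splitting_defect V A A1 A2 \<tau>)"
proof -
  note E = semigroup_in lin_on_add[OF lin_on_semigroup] lin_on_scale[OF lin_on_semigroup]
  note R = shift_inv_props(1)[OF accretive_A1 \<tau>]
    lin_on_add[OF lin_on_shift_inv[OF accretive_A1 \<tau>]] lin_on_scale[OF lin_on_shift_inv[OF accretive_A1 \<tau>]]
  show ?thesis
    unfolding lin_on_def using subspace_V
    by (simp add: splitting_defect_eq \<tau> subspace_add subspace_scale E R
        lin_on_add[OF lin_on_A2] lin_on_scale[OF lin_on_A2] algebra_simps)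
qed

lemma norm_splitting_defect_le:
  assumes v: "v \<in> V" and \<tau>: "\<tau> \<ge> 0"
    and K2: "\<And>u. u \<in> V \<Longrightarrow> norm (A2 u) \<le> K2 * norm (A u)" and "K2 \<ge> 0"
  shows "norm (splitting_defect V A A1 A2 \<tau> v) \<le> (2 + K2 * (\<bar>cb\<bar> / ca)) * norm v"
proof -
  have "norm (\<tau> *\<^sub>R A2 (semigroup_op A \<tau> v)) \<le> \<tau> * (K2 * norm (A (semigroup_op A \<tau> v)))"
    using K2[OF semigroup_in[OF v]] \<tau> by (simp add: mult_left_mono)
  also have "\<dots> = K2 * (\<tau> * norm (A (semigroup_op A \<tau> v)))" by simp
  also have "\<dots> \<le> K2 * (\<bar>cb\<bar> / ca * norm v)"
    using semigroup_smoothing[OF v \<tau>] \<open>K2 \<ge> 0\<close> by (rule mult_left_mono)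
  finally have "norm (\<tau> *\<^sub>R A2 (semigroup_op A \<tau> v)) \<le> K2 * (\<bar>cb\<bar> / ca) * norm v" by simp
  moreover have "norm (semigroup_op A \<tau> v) \<le> norm v" by (rule norm_semigroup_le[OF v \<tau>])
  moreover have "norm (shift_inv V A1 \<tau> v) \<le> norm v" by (rule norm_shift_inv[OF accretive_A1 \<tau> v])
  moreover have "norm (splitting_defect V A A1 A2 \<tau> v) \<le> norm (semigroup_op A \<tau> v)
      + norm (\<tau> *\<^sub>R A2 (semigroup_op A \<tau> v)) + norm (shift_inv V A1 \<tau> v)"
    unfolding splitting_defect_eq[OF v \<tau>]
    using norm_triangle_ineq[of "semigroup_op A \<tau> v" "\<tau> *\<^sub>R A2 (semigroup_op A \<tau> v)"]
      norm_triangle_ineq4[of "semigroup_op A \<tau> v + \<tau> *\<^sub>R A2 (semigroup_op A \<tau> v)" "shift_inv V A1 \<tau> v"]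
    by linarith
  ultimately show ?thesis by (simp add: algebra_simps)
qed

lemma norm_diff_shift_inv:
  assumes T: "accretive_on V T" and \<tau>: "\<tau> \<ge> 0" and v: "v \<in> V"
  shows "norm (v - shift_inv V T \<tau> v) = \<tau> * norm (T (shift_inv V T \<tau> v))"
proof -
  have "v - shift_inv V T \<tau> v = \<tau> *\<^sub>R T (shift_inv V T \<tau> v)"
    using shift_inv_props(2)[OF T \<tau> v] by (metis add_diff_cancel_left')
  then show ?thesis using \<tau> by simp
qed

lemma norm_splitting_defect_le_A:
  assumes v: "v \<in> V" and \<tau>: "\<tau> \<ge> 0"
    and K1: "\<And>u. u \<in> V \<Longrightarrow> norm (A1 u) \<le> K1 * norm (A u)"
    and K2: "\<And>u. u \<in> V \<Longrightarrow> norm (A2 u) \<le> K2 * norm (A u)" and "K2 \<ge> 0"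
  shows "norm (splitting_defect V A A1 A2 \<tau> v) \<le> \<tau> * (1 + K1 + K2) * norm (A v)"
proof -
  have "norm (A2 (semigroup_op A \<tau> v)) \<le> K2 * norm (semigroup_op A \<tau> (A v))"
    using K2[OF semigroup_in[OF v]] by (simp add: semigroup_commute[OF v])
  also have "\<dots> \<le> K2 * norm (A v)"
    using norm_semigroup_le[OF A_in[OF v] \<tau>] \<open>K2 \<ge> 0\<close> by (rule mult_left_mono)
  finally have n2: "norm (\<tau> *\<^sub>R A2 (semigroup_op A \<tau> v)) \<le> \<tau> * (K2 * norm (A v))"
    using \<tau> by (simp add: mult_left_mono)
  have "norm (v - shift_inv V A1 \<tau> v) = \<tau> * norm (shift_inv V A1 \<tau> (A1 v))"
    using norm_diff_shift_inv[OF accretive_A1 \<tau> v] by (simp add: shift_inv_commute[OF accretive_A1 \<tau> v])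
  also have "\<dots> \<le> \<tau> * norm (A1 v)"
    using norm_shift_inv[OF accretive_A1 \<tau> A1_in[OF v]] \<tau> by (rule mult_left_mono)
  also have "\<dots> \<le> \<tau> * (K1 * norm (A v))" using K1[OF v] \<tau> by (rule mult_left_mono)
  finally have n3: "norm (v - shift_inv V A1 \<tau> v) \<le> \<tau> * (K1 * norm (A v))" .
  have n1: "norm (semigroup_op A \<tau> v - v) \<le> \<tau> * norm (A v)" by (rule norm_semigroup_diff_le[OF v \<tau>])
  have "splitting_defect V A A1 A2 \<tau> v
      = (semigroup_op A \<tau> v - v) + \<tau> *\<^sub>R A2 (semigroup_op A \<tau> v) + (v - shift_inv V A1 \<tau> v)"
    by (simp add: splitting_defect_eq[OF v \<tau>])
  have "norm (splitting_defect V A A1 A2 \<tau> v)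
      \<le> norm (semigroup_op A \<tau> v - v) + norm (\<tau> *\<^sub>R A2 (semigroup_op A \<tau> v)) + norm (v - shift_inv V A1 \<tau> v)"
    unfolding \<open>splitting_defect V A A1 A2 \<tau> v = _\<close> by (rule norm_add3_le)
  then show ?thesis using n1 n2 n3 by (simp add: algebra_simps)
qed

lemma norm_splitting_defect_le_ce:
  assumes v: "v \<in> V" and \<tau>: "\<tau> \<ge> 0"
  shows "norm (splitting_defect V A A1 A2 \<tau> v) \<le> 4 * \<tau> * ce * norm v"
proof -
  have "norm (semigroup_op A \<tau> v - v) \<le> \<tau> * norm (A v)" by (rule norm_semigroup_diff_le[OF v \<tau>])
  also have "\<dots> \<le> \<tau> * (2 * ce * norm v)" using norm_A_le[OF v] \<tau> by (rule mult_left_mono)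
  finally have n1: "norm (semigroup_op A \<tau> v - v) \<le> \<tau> * (2 * ce * norm v)" .
  have "norm (A2 (semigroup_op A \<tau> v)) \<le> ce * norm (semigroup_op A \<tau> v)"
    by (rule norm_A2_le[OF semigroup_in[OF v]])
  also have "\<dots> \<le> ce * norm v" using norm_semigroup_le[OF v \<tau>] ce_nonneg by (rule mult_left_mono)
  finally have n2: "norm (\<tau> *\<^sub>R A2 (semigroup_op A \<tau> v)) \<le> \<tau> * (ce * norm v)"
    using \<tau> by (simp add: mult_left_mono)
  have "norm (A1 (shift_inv V A1 \<tau> v)) \<le> ce * norm (shift_inv V A1 \<tau> v)"
    by (rule norm_A1_le[OF shift_inv_props(1)[OF accretive_A1 \<tau> v]])
  also have "\<dots> \<le> ce * norm v" using norm_shift_inv[OF accretive_A1 \<tau> v] ce_nonneg by (rule mult_left_mono)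
  finally have n3: "norm (v - shift_inv V A1 \<tau> v) \<le> \<tau> * (ce * norm v)"
    using \<tau> by (simp add: norm_diff_shift_inv[OF accretive_A1 \<tau> v] mult_left_mono)
  have "splitting_defect V A A1 A2 \<tau> v
      = (semigroup_op A \<tau> v - v) + \<tau> *\<^sub>R A2 (semigroup_op A \<tau> v) + (v - shift_inv V A1 \<tau> v)"
    by (simp add: splitting_defect_eq[OF v \<tau>])
  have "norm (splitting_defect V A A1 A2 \<tau> v)
      \<le> norm (semigroup_op A \<tau> v - v) + norm (\<tau> *\<^sub>R A2 (semigroup_op A \<tau> v)) + norm (v - shift_inv V A1 \<tau> v)"
    unfolding \<open>splitting_defect V A A1 A2 \<tau> v = _\<close> by (rule norm_add3_le)
  then show ?thesis using n1 n2 n3 by (simp add: algebra_simps)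
qed

end

section \<open>Resolvents and negative fractional powers of a sectorial operator\<close>

lemma cshift_of_real:
  assumes "lin_on D A"
  shows "cshift A (complex_of_real (- t)) (x, 0) = (A x + t *\<^sub>R x, 0)"
  using lin_on_scale[OF assms subspace_0[OF lin_on_subspace[OF assms]], of 0] by (simp add: cshift_def)

lemma in_resolvent_set_of_real_ex1:
  assumes A: "lin_on D A" and res: "in_resolvent_set D A (complex_of_real (- t))"
  shows "\<exists>!x. x \<in> D \<and> A x + t *\<^sub>R x = y"
proof -
  have D0: "0 \<in> D" using subspace_0[OF lin_on_subspace[OF A]] .
  obtain p where p: "p \<in> D \<times> D" "cshift A (complex_of_real (- t)) p = (y, 0)"
    and p_unique: "\<And>p'. p' \<in> D \<times> D \<Longrightarrow> cshift A (complex_of_real (- t)) p' = (y, 0) \<Longrightarrow> p' = p"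
    using res unfolding in_resolvent_set_def by metis
  have "fst p \<in> D \<and> A (fst p) + t *\<^sub>R fst p = y"
    using p by (cases p) (simp add: cshift_def)
  moreover have "x = fst p" if "x \<in> D" "A x + t *\<^sub>R x = y" for x
    using p_unique[of "(x, 0)"] that D0 cshift_of_real[OF A] by auto
  ultimately show ?thesis by blast
qed

lemma in_resolvent_set_of_real_bound:
  assumes A: "lin_on D A" and x: "x \<in> D"
    and bound: "\<forall>p\<in>D \<times> D. c * norm p \<le> M * norm (cshift A (complex_of_real (- t)) p)"
  shows "c * norm x \<le> M * norm (A x + t *\<^sub>R x)"
proof -
  have "c * norm (x, 0::'a) \<le> M * norm (cshift A (complex_of_real (- t)) (x, 0))"
    using bound x subspace_0[OF lin_on_subspace[OF A]] by blast
  then show ?thesis unfolding cshift_of_real[OF A] by (simp add: norm_prod_def)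
qed

lemma has_integral_powr_split:
  fixes a B1 B2 z :: real
  assumes z: "0 < z" "z < 1" and a: "a > 0"
  shows "((\<lambda>t. if t \<le> a then t powr (-z) * B1 else t powr (-z-1) * B2) has_integral
           (a powr (1-z) / (1-z) * B1 + a powr (-z) / z * B2)) {0<..}"
proof -
  define g where "g t = (if t \<le> a then t powr (-z) * B1 else t powr (-z-1) * B2)" for t
  have i1: "((\<lambda>t. t powr (-z) * B1) has_integral (a powr (-z+1) / (-z+1) * B1)) {0..a}"
    by (rule has_integral_mult_left[OF has_integral_powr_from_0]) (use z a in auto)
  have e1: "-z+1 = 1-z" by simp
  have i1': "(g has_integral (a powr (1-z) / (1-z) * B1)) {0..a}"
    unfolding e1[symmetric] by (rule has_integral_spike[OF negligible_empty _ i1]) (auto simp: g_def)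
  have i2: "((\<lambda>t. t powr (-z-1) * B2) has_integral (- (a powr (-z-1+1)) / (-z-1+1) * B2)) {a..}"
    by (rule has_integral_mult_left[OF has_integral_powr_to_inf]) (use z a in auto)
  have e2: "- (a powr (-z-1+1)) / (-z-1+1) * B2 = a powr (-z) / z * B2" by simp
  have i2': "(g has_integral (a powr (-z) / z * B2)) {a..}"
    unfolding e2[symmetric]
  proof (rule has_integral_spike[OF negligible_sing _ i2])
    fix t assume "t \<in> {a..} - {a}"
    then show "g t = t powr (-z-1) * B2" by (auto simp: g_def)
  qed
  have "(g has_integral (a powr (1-z) / (1-z) * B1 + a powr (-z) / z * B2)) ({0..a} \<union> {a..})"
  proof (rule has_integral_Un[OF i1' i2'])
    have "{0..a} \<inter> {a..} = {a}" using a by auto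
    then show "negligible ({0..a} \<inter> {a..})" by simp
  qed
  moreover have "{0..a} \<union> {a..} = {0::real..}" using a by auto
  ultimately have i0: "(g has_integral (a powr (1-z) / (1-z) * B1 + a powr (-z) / z * B2)) {0..}" by simp
  have "(g has_integral (a powr (1-z) / (1-z) * B1 + a powr (-z) / z * B2)) {0<..}"
  proof (subst has_integral_spike_set_eq)
    have em: "{x \<in> {0<..} - {0..}. g x \<noteq> 0} = {}" by auto
    show "negligible {x \<in> {0<..} - {0..}. g x \<noteq> 0}" unfolding em by (rule negligible_empty)
    show "negligible {x \<in> {0..} - {0<..}. g x \<noteq> 0}"
      by (rule negligible_subset[OF negligible_sing[of 0]]) auto
  qed (rule i0)
  then show ?thesis unfolding g_def .
qed

lemma norm_integral_bounded_linear_le: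
  fixes f :: "real \<Rightarrow> 'a::real_normed_vector" and T :: "'a \<Rightarrow> 'b::real_inner"
  assumes T: "bounded_linear T" and g: "(g has_integral I) S"
    and fg: "\<And>t. t \<in> S \<Longrightarrow> norm (T (f t)) \<le> g t"
  shows "norm (T (integral S f)) \<le> I"
proof -
  have I: "I \<ge> 0" using has_integral_nonneg[OF g] fg norm_ge_zero order_trans by blast
  show ?thesis
  proof (cases "f integrable_on S")
    case False
    then show ?thesis using I bounded_linear.linear[OF T] by (simp add: not_integrable_integral linear_0)
  next
    case True
    define w where "w = T (integral S f)"
    have Tf: "(T \<circ> f) integrable_on S" by (rule integrable_linear[OF True T])
    have "w = integral S (T \<circ> f)" unfolding w_def by (rule integral_linear[OF True T, symmetric])
    then have "inner w w = integral S ((\<lambda>u. inner u w) \<circ> (T \<circ> f))"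
      using integral_linear[OF Tf bounded_linear_inner_left, of w] by simp
    also have "\<dots> \<le> integral S (\<lambda>t. g t * norm w)"
    proof (rule integral_le)
      show "(\<lambda>u. inner u w) \<circ> (T \<circ> f) integrable_on S"
        by (rule integrable_linear[OF Tf bounded_linear_inner_left])
      show "(\<lambda>t. g t * norm w) integrable_on S" using has_integral_mult_left[OF g] by blast
      show "((\<lambda>u. inner u w) \<circ> (T \<circ> f)) t \<le> g t * norm w" if "t \<in> S" for t
        using norm_cauchy_schwarz[of "T (f t)" w] fg[OF that] by (simp add: order_trans mult_right_mono)
    qed
    also have "\<dots> = I * norm w" using integral_unique[OF has_integral_mult_left[OF g]] .
    finally have "(norm w)\<^sup>2 \<le> I * norm w" by (simp add: power2_norm_eq_inner)
    then show ?thesis unfolding w_def[symmetric] using I by (cases "norm w = 0") (simp_all add: power2_eq_square)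
  qed
qed

lemma norm_scaleR_sin_pi_le: "norm ((sin (pi * z) / pi) *\<^sub>R x) \<le> norm x"
proof -
  have "\<bar>sin (pi * z)\<bar> \<le> pi" using abs_sin_le_one[of "pi * z"] pi_gt3 by linarith
  then have "\<bar>sin (pi * z) / pi\<bar> \<le> 1" by (simp add: abs_divide divide_le_eq_1)
  then have "\<bar>sin (pi * z) / pi\<bar> * norm x \<le> 1 * norm x" by (rule mult_right_mono) simp
  then show ?thesis by (simp only: norm_scaleR mult_1_left)
qed

locale sectorial_splitting =
  fixes D D1 D2 :: "'a::{real_inner,complete_space} set" and A A1 A2 :: "'a \<Rightarrow> 'a"
  assumes condA: "condA D A D1 A1 D2 A2"
begin

lemma lin_on_A: "lin_on D A"
  using condA unfolding condA_def by blast

lemma subspace_D: "subspace D"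
  using lin_on_subspace[OF lin_on_A] .

lemma Arg_negative_real: "t > 0 \<Longrightarrow> Arg (complex_of_real (- t)) = pi"
  using Arg_of_real[of "- t"] by simp

lemma resolvent_ex1: "t \<ge> 0 \<Longrightarrow> \<exists>!x. x \<in> D \<and> A x + t *\<^sub>R x = y"
proof (cases "t = 0")
  case True
  have "in_resolvent_set D A 0" using condA unfolding condA_def by blast
  then have "in_resolvent_set D A (complex_of_real (- 0))" by simp
  from in_resolvent_set_of_real_ex1[OF lin_on_A this] show ?thesis using True by simp
next
  case False
  assume "t \<ge> 0"
  obtain \<phi> where "\<phi> < pi / 2" and sector: "\<And>z. \<phi> < \<bar>Arg z\<bar> \<Longrightarrow> in_resolvent_set D A z"
    using condA unfolding condA_def by blast
  have "\<phi> < \<bar>Arg (complex_of_real (- t))\<bar>"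
    using Arg_negative_real[of t] \<open>\<phi> < pi / 2\<close> pi_gt_zero False \<open>t \<ge> 0\<close> by linarith
  then have "in_resolvent_set D A (complex_of_real (- t))" by (rule sector)
  then show ?thesis by (rule in_resolvent_set_of_real_ex1[OF lin_on_A])
qed

lemma res_op_solves: "t > 0 \<Longrightarrow> res_op D A t y \<in> D \<and> A (res_op D A t y) + t *\<^sub>R res_op D A t y = y"
  unfolding res_op_def using theI'[OF resolvent_ex1] by simp

lemma inv_op_solves: "inv_op D A y \<in> D \<and> A (inv_op D A y) = y"
  unfolding inv_op_def using theI'[OF resolvent_ex1[of 0]] by simp

lemma inv_op_eqI: "x \<in> D \<Longrightarrow> A x = y \<Longrightarrow> inv_op D A y = x"
  unfolding inv_op_def using resolvent_ex1[of 0 y] by (intro the_equality) auto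

lemma resolvent_bound: "\<exists>C\<ge>0. \<forall>t>0. \<forall>x\<in>D. t * norm x \<le> C * norm (A x + t *\<^sub>R x)"
proof -
  obtain \<phi> C where "\<phi> < pi / 2" and sector: "\<And>z. \<phi> < \<bar>Arg z\<bar> \<Longrightarrow>
      \<forall>p\<in>D \<times> D. cmod z * norm p \<le> C * norm (cshift A z p)"
    using condA unfolding condA_def by metis
  have "t * norm x \<le> C * norm (A x + t *\<^sub>R x)" if "t > 0" "x \<in> D" for t x
  proof (rule in_resolvent_set_of_real_bound[OF lin_on_A \<open>x \<in> D\<close>])
    have "\<phi> < \<bar>Arg (complex_of_real (- t))\<bar>"
      using Arg_negative_real[OF that(1)] \<open>\<phi> < pi / 2\<close> pi_gt_zero by linarith
    moreover have "cmod (complex_of_real (- t)) = t" using that by simp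
    ultimately show "\<forall>p\<in>D \<times> D. t * norm p \<le> C * norm (cshift A (complex_of_real (- t)) p)"
      using sector by metis
  qed
  moreover have "C * norm y \<le> \<bar>C\<bar> * norm y" for y :: 'a by (simp add: mult_right_mono)
  ultimately show ?thesis by (meson abs_ge_zero order_trans)
qed

context
  fixes T :: "'a \<Rightarrow> 'a" and C0 C1 Cs \<tau> :: real
  assumes T0: "\<And>y. norm (T y) \<le> C0 * norm y" and T1: "\<And>y. norm (T (inv_op D A y)) \<le> C1 * \<tau> * norm y"
    and C0: "C0 \<ge> 0" and C1: "C1 \<ge> 0" and \<tau>: "\<tau> > 0"
    and Cs: "Cs \<ge> 0" "\<And>t x. t > 0 \<Longrightarrow> x \<in> D \<Longrightarrow> t * norm x \<le> Cs * norm (A x + t *\<^sub>R x)"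
begin

lemma norm_image_res_op_le:
  assumes t: "t > 0"
  shows "norm (T (res_op D A t x)) \<le> C1 * \<tau> * ((1 + Cs) * norm x)"
    and "t * norm (T (res_op D A t x)) \<le> C0 * (Cs * norm x)"
proof -
  define r where "r = res_op D A t x"
  have r: "r \<in> D" "A r + t *\<^sub>R r = x" using res_op_solves[OF t] by (simp_all add: r_def)
  have tr: "t * norm r \<le> Cs * norm x" using Cs(2)[OF t r(1)] r(2) by simp
  have "norm (A r) \<le> norm x + t * norm r"
    using norm_triangle_ineq4[of x "t *\<^sub>R r"] r(2) t by (simp add: eq_diff_eq[symmetric])
  then have "norm (A r) \<le> (1 + Cs) * norm x" using tr by (simp add: algebra_simps)
  moreover have "norm (T r) \<le> C1 * \<tau> * norm (A r)" using T1[of "A r"] inv_op_eqI[OF r(1) refl] by simp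
  ultimately show "norm (T (res_op D A t x)) \<le> C1 * \<tau> * ((1 + Cs) * norm x)"
    unfolding r_def[symmetric] using C1 \<tau> by (meson mult_left_mono order_trans mult_nonneg_nonneg less_imp_le)
  have "t * norm (T r) \<le> C0 * (t * norm r)" using T0[of r] t by (simp add: mult_left_mono mult.left_commute)
  also have "\<dots> \<le> C0 * (Cs * norm x)" using tr C0 by (rule mult_left_mono)
  finally show "t * norm (T (res_op D A t x)) \<le> C0 * (Cs * norm x)" by (simp add: r_def)
qed

lemma norm_image_balakrishnan_integrand_le:
  assumes T: "linear T" and t: "t > 0"
  shows "norm (T (t powr (- \<zeta>) *\<^sub>R res_op D A t x))
    \<le> (if t \<le> 1 / \<tau> then t powr (- \<zeta>) * (C1 * \<tau> * ((1 + Cs) * norm x))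
        else t powr (- \<zeta> - 1) * (C0 * (Cs * norm x)))"
proof -
  have Tf: "norm (T (t powr (- \<zeta>) *\<^sub>R res_op D A t x)) = t powr (- \<zeta>) * norm (T (res_op D A t x))"
    unfolding linear_scale[OF T] by simp
  show ?thesis
  proof (cases "t \<le> 1 / \<tau>")
    case True
    then show ?thesis unfolding Tf using norm_image_res_op_le(1)[OF t] by (simp add: mult_left_mono)
  next
    case False
    have "norm (T (res_op D A t x)) \<le> C0 * (Cs * norm x) / t"
      using norm_image_res_op_le(2)[OF t] t by (simp add: pos_le_divide_eq mult.commute)
    then have "t powr (- \<zeta>) * norm (T (res_op D A t x)) \<le> t powr (- \<zeta>) * (C0 * (Cs * norm x) / t)"
      by (rule mult_left_mono) simp
    then show ?thesis unfolding Tf using False t by (simp add: powr_diff)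
  qed
qed

text \<open>Split Balakrishnan's integral at \<open>s = 1/\<tau>\<close>: below, the \<open>O(\<tau>)\<close> bound of \<open>T A\<^sup>-\<^sup>1\<close>
  is integrable against \<open>s\<^sup>-\<^sup>\<zeta>\<close>; above, the uniform bound of \<open>T\<close> together with
  \<open>\<parallel>(s + A)\<^sup>-\<^sup>1\<parallel> = O(1/s)\<close> is.\<close>

lemma norm_image_neg_frac_pow_le:
  assumes T: "linear T" and \<zeta>: "0 < \<zeta>" "\<zeta> < 1"
  shows "norm (T (neg_frac_pow D A \<zeta> x)) \<le> (C1 * (1 + Cs) / (1 - \<zeta>) + C0 * Cs / \<zeta>) * \<tau> powr \<zeta> * norm x"
proof -
  have bounded_T: "bounded_linear T"
    using T T0 by (intro bounded_linear_intro[where K = C0]) (auto simp: linear_add linear_scale mult.commute)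
  define f where "f t = t powr (- \<zeta>) *\<^sub>R res_op D A t x" for t
  define B1 where "B1 = C1 * \<tau> * ((1 + Cs) * norm x)"
  define B2 where "B2 = C0 * (Cs * norm x)"
  have "norm (T (neg_frac_pow D A \<zeta> x)) \<le> norm (T (integral {0<..} f))"
  proof -
    have "neg_frac_pow D A \<zeta> x = (sin (pi * \<zeta>) / pi) *\<^sub>R integral {0<..} f"
      using \<zeta> by (simp add: neg_frac_pow_def f_def[abs_def])
    then show ?thesis using norm_scaleR_sin_pi_le by (simp only: linear_scale[OF T])
  qed
  also have "norm (T (integral {0<..} f))
      \<le> (1 / \<tau>) powr (1 - \<zeta>) / (1 - \<zeta>) * B1 + (1 / \<tau>) powr (- \<zeta>) / \<zeta> * B2"
  proof (rule norm_integral_bounded_linear_le[OF bounded_T has_integral_powr_split])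
    show "norm (T (f t)) \<le> (if t \<le> 1 / \<tau> then t powr (- \<zeta>) * B1 else t powr (- \<zeta> - 1) * B2)"
      if "t \<in> {0<..}" for t
      using norm_image_balakrishnan_integrand_le[OF T, of t] that unfolding f_def B1_def B2_def by simp
  qed (use \<zeta> \<tau> in auto)
  also have "\<dots> = (C1 * (1 + Cs) / (1 - \<zeta>) + C0 * Cs / \<zeta>) * \<tau> powr \<zeta> * norm x"
  proof -
    have p: "(1 / \<tau>) powr (1 - \<zeta>) * \<tau> = \<tau> powr \<zeta>" "(1 / \<tau>) powr (- \<zeta>) = \<tau> powr \<zeta>"
      using \<tau> by (simp_all add: powr_divide powr_diff powr_minus_divide)
    have "(1 / \<tau>) powr (1 - \<zeta>) / (1 - \<zeta>) * B1
        = C1 * (1 + Cs) / (1 - \<zeta>) * ((1 / \<tau>) powr (1 - \<zeta>) * \<tau>) * norm x"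
      unfolding B1_def by (simp add: divide_inverse ac_simps)
    moreover have "(1 / \<tau>) powr (- \<zeta>) / \<zeta> * B2 = C0 * Cs / \<zeta> * (1 / \<tau>) powr (- \<zeta>) * norm x"
      unfolding B2_def by (simp add: divide_inverse ac_simps)
    ultimately show ?thesis by (simp only: p distrib_right)
  qed
  finally show ?thesis .
qed

end

lemma neg_frac_pow_interpolation:
  fixes T :: "'i \<Rightarrow> real \<Rightarrow> 'a \<Rightarrow> 'a"
  assumes \<zeta>: "\<zeta> \<in> {0..1}" and C0: "C0 \<ge> 0" and C1: "C1 \<ge> 0"
    and lin: "\<And>i \<tau>. i \<in> J \<Longrightarrow> \<tau> > 0 \<Longrightarrow> linear (T i \<tau>)"
    and T0: "\<And>i \<tau> y. i \<in> J \<Longrightarrow> \<tau> > 0 \<Longrightarrow> norm (T i \<tau> y) \<le> C0 * norm y"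
    and T1: "\<And>i \<tau> y. i \<in> J \<Longrightarrow> \<tau> > 0 \<Longrightarrow> norm (T i \<tau> (inv_op D A y)) \<le> C1 * \<tau> * norm y"
  obtains C where "\<And>i \<tau> x. i \<in> J \<Longrightarrow> \<tau> > 0 \<Longrightarrow> norm (T i \<tau> (neg_frac_pow D A \<zeta> x)) \<le> C * \<tau> powr \<zeta> * norm x"
proof -
  obtain Cs where Cs: "Cs \<ge> 0" "\<And>t x. t > 0 \<Longrightarrow> x \<in> D \<Longrightarrow> t * norm x \<le> Cs * norm (A x + t *\<^sub>R x)"
    using resolvent_bound by blast
  consider "\<zeta> = 0" | "\<zeta> = 1" | "0 < \<zeta>" "\<zeta> < 1" using \<zeta> by fastforce
  then show thesis
  proof cases
    case 1
    show thesis by (rule that[of C0]) (use 1 T0 in \<open>simp add: neg_frac_pow_def\<close>)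
  next
    case 2
    show thesis by (rule that[of C1]) (use 2 T1 in \<open>simp add: neg_frac_pow_def\<close>)
  next
    case 3
    show thesis
      by (rule that, rule norm_image_neg_frac_pow_le[OF T0 T1 C0 C1 _ Cs lin 3]) simp_all
  qed
qed

end

section \<open>Estimates uniform in the mesh size\<close>

locale uniform_galerkin_splitting = sectorial_splitting D D1 D2 A A1 A2
  for D D1 D2 :: "'a::{real_inner,complete_space} set" and A A1 A2 +
  fixes I :: "real set" and V :: "real \<Rightarrow> 'a set" and P :: "real \<Rightarrow> 'a \<Rightarrow> 'a"
    and ipV :: "real \<Rightarrow> 'a \<Rightarrow> 'a \<Rightarrow> real" and Ah Ah1 Ah2 :: "real \<Rightarrow> 'a \<Rightarrow> 'a"
    and ca cb Ce Cf Cg Cp :: real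
  assumes galerkin: "\<And>h. h \<in> I \<Longrightarrow>
      galerkin_splitting (V h) (P h) (Ah h) (Ah1 h) (Ah2 h) (ipV h) ca cb (Ce / h\<^sup>2)"
    and h_pos: "\<And>h. h \<in> I \<Longrightarrow> h > 0"
    and ca_pos: "ca > 0" and Ce: "Ce \<ge> 0" and Cf: "Cf \<ge> 0" and Cg: "Cg \<ge> 0" and Cp: "Cp \<ge> 0"
    and projection_error: "\<And>h v. h \<in> I \<Longrightarrow> v \<in> D \<Longrightarrow> norm (v - P h v) \<le> Cp * h\<^sup>2 * norm (A v)"
    and consistency1: "\<And>h v. h \<in> I \<Longrightarrow> v \<in> D \<Longrightarrow> norm (P h (A1 v) - Ah1 h (P h v)) \<le> Cf * norm (A v)"
    and consistency2: "\<And>h v. h \<in> I \<Longrightarrow> v \<in> D \<Longrightarrow> norm (P h (A2 v) - Ah2 h (P h v)) \<le> Cf * norm (A v)"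
    and inverse_error: "\<And>h x. h \<in> I \<Longrightarrow>
      norm (inv_op D A x - inv_op (V h) (Ah h) (P h x)) \<le> Cg * h\<^sup>2 * norm x"

lemma mult_le_abs_mult: "a \<le> c * b \<Longrightarrow> b \<ge> 0 \<Longrightarrow> a \<le> \<bar>c\<bar> * (b::real)"
  by (meson abs_ge_self mult_right_mono order_trans)

lemma galerkin_splitting_of_condAh:
  assumes P: "condP I V P D A" and Ah: "condAh I V P ipV Ah Ah1 Ah2 D A A1 A2" and h: "h \<in> I"
    and ca: "ca > 0" "\<forall>h\<in>I. \<forall>v\<in>V h. inner (Ah h v) v \<ge> ca * (normV (ipV h) v)\<^sup>2"
    and cb: "\<forall>h\<in>I. \<forall>v\<in>V h. \<forall>w\<in>V h. \<bar>inner (Ah h v) w\<bar> \<le> cb * normV (ipV h) v * normV (ipV h) w"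
    and Ce: "Ce \<ge> 0" "\<forall>h\<in>I. \<forall>x. norm (Ah1 h (P h x)) \<le> Ce / h\<^sup>2 * norm x \<and>
      norm (Ah2 h (P h x)) \<le> Ce / h\<^sup>2 * norm x"
  shows "galerkin_splitting (V h) (P h) (Ah h) (Ah1 h) (Ah2 h) (ipV h) ca cb (Ce / h\<^sup>2)"
proof (intro galerkin_splitting.intro finite_projection.intro galerkin_splitting_axioms.intro)
  show "bounded_linear (P h)" "\<And>x. P h x \<in> V h" "\<And>v. v \<in> V h \<Longrightarrow> P h v = v"
    "\<exists>B. finite B \<and> V h = span B"
    using P h unfolding condP_def by auto
  show "accretive_on (V h) (Ah1 h)" "accretive_on (V h) (Ah2 h)"
    using Ah h unfolding condAh_def accretive_on_def by auto
  show "\<And>v. v \<in> V h \<Longrightarrow> Ah h v = Ah1 h v + Ah2 h v" "inner_on (V h) (ipV h)"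
    using Ah h unfolding condAh_def by auto
qed (use ca cb Ce h in auto)

lemma uniform_galerkin_splitting_exists:
  assumes A: "condA D A D1 A1 D2 A2" and P: "condP I V P D A"
    and Ah: "condAh I V P ipV Ah Ah1 Ah2 D A A1 A2"
  obtains ca cb Ce Cf Cg Cp where
    "uniform_galerkin_splitting D D1 D2 A A1 A2 I V P ipV Ah Ah1 Ah2 ca cb Ce Cf Cg Cp"
proof -
  from Ah obtain ca cb Ce Cf Cg where
    ca: "ca > 0" "\<forall>h\<in>I. \<forall>v\<in>V h. inner (Ah h v) v \<ge> ca * (normV (ipV h) v)\<^sup>2"
    and cb: "\<forall>h\<in>I. \<forall>v\<in>V h. \<forall>w\<in>V h. \<bar>inner (Ah h v) w\<bar> \<le> cb * normV (ipV h) v * normV (ipV h) w"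
    and Ce: "\<forall>h\<in>I. \<forall>x. norm (Ah1 h (P h x)) \<le> Ce / h\<^sup>2 * norm x \<and>
      norm (Ah2 h (P h x)) \<le> Ce / h\<^sup>2 * norm x"
    and Cf: "\<forall>h\<in>I. \<forall>v\<in>D. norm (P h (A1 v) - Ah1 h (P h v)) \<le> Cf * norm (A v) \<and>
      norm (P h (A2 v) - Ah2 h (P h v)) \<le> Cf * norm (A v)"
    and Cg: "\<forall>h\<in>I. \<forall>x. norm (inv_op D A x - inv_op (V h) (Ah h) (P h x)) \<le> Cg * h\<^sup>2 * norm x"
    unfolding condAh_def by (elim conjE exE) blast
  from P obtain Cp where Cp: "\<forall>h\<in>I. \<forall>v\<in>D. norm (v - P h v) \<le> Cp * h\<^sup>2 * norm (A v)"
    unfolding condP_def by blast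
  have Ce': "\<forall>h\<in>I. \<forall>x. norm (Ah1 h (P h x)) \<le> \<bar>Ce\<bar> / h\<^sup>2 * norm x \<and>
      norm (Ah2 h (P h x)) \<le> \<bar>Ce\<bar> / h\<^sup>2 * norm x"
  proof (intro ballI allI)
    fix h x assume "h \<in> I"
    then have "norm (Ah1 h (P h x)) \<le> Ce / h\<^sup>2 * norm x" "norm (Ah2 h (P h x)) \<le> Ce / h\<^sup>2 * norm x"
      using Ce by auto
    moreover have "Ce / h\<^sup>2 * norm x \<le> \<bar>Ce\<bar> / h\<^sup>2 * norm x"
      by (intro mult_right_mono divide_right_mono) auto
    ultimately show "norm (Ah1 h (P h x)) \<le> \<bar>Ce\<bar> / h\<^sup>2 * norm x \<and>
        norm (Ah2 h (P h x)) \<le> \<bar>Ce\<bar> / h\<^sup>2 * norm x" by linarith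
  qed
  show thesis
  proof (rule that[of ca cb "\<bar>Ce\<bar>" "\<bar>Cf\<bar>" "\<bar>Cg\<bar>" "\<bar>Cp\<bar>"],
      intro uniform_galerkin_splitting.intro uniform_galerkin_splitting_axioms.intro)
    show "sectorial_splitting D D1 D2 A A1 A2" by (rule sectorial_splitting.intro[OF A])
    show "galerkin_splitting (V h) (P h) (Ah h) (Ah1 h) (Ah2 h) (ipV h) ca cb (\<bar>Ce\<bar> / h\<^sup>2)" if "h \<in> I" for h
      by (rule galerkin_splitting_of_condAh[OF P Ah that ca cb _ Ce']) simp
    show "h > 0" if "h \<in> I" for h using P that unfolding condP_def by auto
  qed (use ca Cf Cg Cp in \<open>auto intro: mult_le_abs_mult simp: mult.assoc\<close>)
qed

context uniform_galerkin_splitting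
begin

lemma norm_P_le_smooth:
  assumes h: "h \<in> I" and y: "y \<in> D"
  shows "norm (P h y) \<le> norm y + Cp * h\<^sup>2 * norm (A y)"
  using norm_triangle_ineq4[of y "y - P h y"] projection_error[OF h y] by simp

lemma norm_P_sq_le:
  assumes h: "h \<in> I"
  shows "(norm (P h z))\<^sup>2 \<le> (cb / ca)\<^sup>2 * (2 * Ce) * (norm (inv_op D A z) / h\<^sup>2 + Cg * norm z) * norm z"
proof -
  interpret g: galerkin_splitting "V h" "P h" "Ah h" "Ah1 h" "Ah2 h" "ipV h" ca cb "Ce / h\<^sup>2"
    by (rule galerkin[OF h])
  have h2: "h\<^sup>2 > 0" using h_pos[OF h] by simp
  have "norm (inv_op (V h) (Ah h) (P h z)) \<le> norm (inv_op D A z) + Cg * h\<^sup>2 * norm z"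
    using norm_triangle_ineq4[of "inv_op D A z" "inv_op D A z - inv_op (V h) (Ah h) (P h z)"]
      inverse_error[OF h, of z] by simp
  moreover have "norm (Ah h (P h z)) \<le> 2 * (Ce / h\<^sup>2) * norm z" by (rule g.norm_A_P_le)
  ultimately have "norm (inv_op (V h) (Ah h) (P h z)) * norm (Ah h (P h z))
      \<le> (norm (inv_op D A z) + Cg * h\<^sup>2 * norm z) * (2 * (Ce / h\<^sup>2) * norm z)"
    using Ce Cg by (intro mult_mono) auto
  also have "\<dots> = 2 * Ce * (norm (inv_op D A z) / h\<^sup>2 + Cg * norm z) * norm z"
    using h2 by (simp add: field_simps)
  finally have "(cb / ca)\<^sup>2 * (norm (inv_op (V h) (Ah h) (P h z)) * norm (Ah h (P h z)))
      \<le> (cb / ca)\<^sup>2 * (2 * Ce * (norm (inv_op D A z) / h\<^sup>2 + Cg * norm z) * norm z)"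
    by (rule mult_left_mono) simp
  then show ?thesis using g.norm_sq_le_inv_op[OF g.P_in, of z] unfolding mult.assoc by linarith
qed

text \<open>Uniform boundedness of \<open>P\<^sub>h\<close> is not assumed. Split \<open>x = x\<^sub>s + x\<^sub>r\<close> with the smooth part
  \<open>x\<^sub>s = (I + h\<^sup>2 A)\<^sup>-\<^sup>1 x\<close>: the projection error bounds \<open>P\<^sub>h x\<^sub>s\<close>, and for the rough part
  \<open>A\<^sup>-\<^sup>1 x\<^sub>r = h\<^sup>2 x\<^sub>s\<close> is small, which is what \<open>norm_P_sq_le\<close> needs.\<close>

lemma uniformly_bounded_P: "\<exists>K\<ge>0. \<forall>h\<in>I. \<forall>x. norm (P h x) \<le> K * norm x"
proof -
  obtain Cs where Cs: "Cs \<ge> 0" "\<And>t x. t > 0 \<Longrightarrow> x \<in> D \<Longrightarrow> t * norm x \<le> Cs * norm (A x + t *\<^sub>R x)"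
    using resolvent_bound by blast
  define Q where "Q = (cb / ca)\<^sup>2 * (2 * Ce) * (Cs + Cg * (1 + Cs)) * (1 + Cs)"
  have Q: "Q \<ge> 0" unfolding Q_def using Cs Cg Ce by simp
  have "norm (P h x) \<le> (Cs + Cp * (1 + Cs) + sqrt Q) * norm x" if h: "h \<in> I" for h x
  proof -
    interpret g: galerkin_splitting "V h" "P h" "Ah h" "Ah1 h" "Ah2 h" "ipV h" ca cb "Ce / h\<^sup>2"
      by (rule galerkin[OF h])
    define t where "t = 1 / h\<^sup>2"
    have t: "t > 0" "h\<^sup>2 * t = 1" using h_pos[OF h] by (simp_all add: t_def)
    define xs where "xs = res_op D A t (t *\<^sub>R x)"
    have xs: "xs \<in> D" "A xs + t *\<^sub>R xs = t *\<^sub>R x" using res_op_solves[OF t(1)] by (simp_all add: xs_def)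
    have "t * norm xs \<le> t * (Cs * norm x)" using Cs(2)[OF t(1) xs(1)] xs(2) t by simp
    then have nxs: "norm xs \<le> Cs * norm x" using t by simp
    define xr where "xr = x - xs"
    have nxr: "norm xr \<le> (1 + Cs) * norm x"
      using norm_triangle_ineq4[of x xs] nxs by (simp add: xr_def algebra_simps)
    have Axs: "A xs = t *\<^sub>R xr" using xs(2) by (simp add: xr_def algebra_simps)
    have "inv_op D A xr = h\<^sup>2 *\<^sub>R xs"
      using subspace_scale[OF subspace_D xs(1)] lin_on_scale[OF lin_on_A xs(1)] Axs t(2)
      by (intro inv_op_eqI) simp_all
    then have "(norm (P h xr))\<^sup>2 \<le> (cb / ca)\<^sup>2 * (2 * Ce) * (norm xs + Cg * norm xr) * norm xr"
      using norm_P_sq_le[OF h, of xr] h_pos[OF h] by simp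
    also have "\<dots> \<le> (cb / ca)\<^sup>2 * (2 * Ce) * ((Cs + Cg * (1 + Cs)) * norm x) * ((1 + Cs) * norm x)"
    proof -
      have "norm xs + Cg * norm xr \<le> (Cs + Cg * (1 + Cs)) * norm x"
        using nxs mult_left_mono[OF nxr Cg] by (simp add: algebra_simps)
      then show ?thesis using nxr Ce Cg Cs(1) by (intro mult_mono mult_left_mono) auto
    qed
    also have "\<dots> = Q * (norm x)\<^sup>2" by (simp only: Q_def power2_eq_square mult_ac)
    also have "\<dots> = (sqrt Q * norm x)\<^sup>2" using Q by (simp add: power_mult_distrib)
    finally have "norm (P h xr) \<le> sqrt Q * norm x" by (rule power2_le_imp_le) (use Q in simp)
    moreover have "norm (P h xs) \<le> (Cs + Cp * (1 + Cs)) * norm x"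
    proof -
      have "Cp * h\<^sup>2 * norm (A xs) = Cp * (h\<^sup>2 * t) * norm xr"
        using t(1) by (simp add: Axs mult_ac)
      then have "Cp * h\<^sup>2 * norm (A xs) = Cp * norm xr" by (simp only: t(2) mult_1_right)
      then have "norm (P h xs) \<le> norm xs + Cp * norm xr" using norm_P_le_smooth[OF h xs(1)] by linarith
      then show ?thesis using nxs mult_left_mono[OF nxr Cp] by (simp add: algebra_simps)
    qed
    moreover have "P h x = P h xs + P h xr"
      using linear_add[OF g.linear_P, of xs "x - xs"] by (simp add: xr_def)
    ultimately show ?thesis using norm_triangle_ineq[of "P h xs" "P h xr"] by (simp add: algebra_simps)
  qed
  moreover have "Cs + Cp * (1 + Cs) + sqrt Q \<ge> 0" using Cs Cp Q by simp
  ultimately show ?thesis by blast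
qed

text \<open>With \<open>y = A\<^sub>h u\<close> and \<open>a = A\<^sup>-\<^sup>1 y\<close>: \<open>u - a\<close> is \<open>O(h\<^sup>2)\<close> by the inverse error, which
  compensates the \<open>h\<^sup>-\<^sup>2\<close> in the bound of \<open>A\<^sub>h\<^sub>,\<^sub>\<ell>\<close>, while \<open>A\<^sub>h\<^sub>,\<^sub>\<ell> P\<^sub>h a\<close> is close to
  \<open>P\<^sub>h A\<^sub>\<ell> A\<^sup>-\<^sup>1 y\<close> by consistency.\<close>

lemma norm_part_le_norm_Ah:
  assumes K: "K \<ge> 0" "\<And>h x. h \<in> I \<Longrightarrow> norm (P h x) \<le> K * norm x"
    and M: "\<And>y. norm (Al (inv_op D A y)) \<le> M * norm y"
    and consistent: "\<And>h v. h \<in> I \<Longrightarrow> v \<in> D \<Longrightarrow> norm (P h (Al v) - Ahl h (P h v)) \<le> Cf * norm (A v)"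
    and bounded: "\<And>h x. h \<in> I \<Longrightarrow> norm (Ahl h (P h x)) \<le> Ce / h\<^sup>2 * norm x"
    and lin: "\<And>h. h \<in> I \<Longrightarrow> lin_on (V h) (Ahl h)"
    and h: "h \<in> I" and u: "u \<in> V h"
  shows "norm (Ahl h u) \<le> (Ce * Cg + K * \<bar>M\<bar> + Cf) * norm (Ah h u)"
proof -
  interpret g: galerkin_splitting "V h" "P h" "Ah h" "Ah1 h" "Ah2 h" "ipV h" ca cb "Ce / h\<^sup>2"
    by (rule galerkin[OF h])
  define y where "y = Ah h u"
  have u_inv: "inv_op (V h) (Ah h) (P h y) = u"
    unfolding y_def g.P_id[OF g.A_in[OF u]] by (rule inv_op_eq[OF g.inj_on_A u refl])
  define a where "a = inv_op D A y"
  have a: "a \<in> D" "A a = y" using inv_op_solves by (simp_all add: a_def)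
  have "u = P h a + P h (u - a)" using linear_add[OF g.linear_P, of a "u - a"] g.P_id[OF u] by simp
  then have "Ahl h u = Ahl h (P h a) + Ahl h (P h (u - a))"
    using lin_on_add[OF lin[OF h] g.P_in g.P_in] by metis
  then have "norm (Ahl h u) \<le> norm (Ahl h (P h a)) + norm (Ahl h (P h (u - a)))"
    by (simp add: norm_triangle_ineq)
  moreover have "norm (Ahl h (P h (u - a))) \<le> Ce * Cg * norm y"
  proof -
    have "norm (u - a) \<le> Cg * h\<^sup>2 * norm y"
      using inverse_error[OF h, of y] u_inv unfolding a_def by (simp add: norm_minus_commute)
    then have "Ce / h\<^sup>2 * norm (u - a) \<le> Ce / h\<^sup>2 * (Cg * h\<^sup>2 * norm y)"
      using Ce by (intro mult_left_mono) auto
    also have "\<dots> = Ce * Cg * norm y" using h_pos[OF h] by (simp add: field_simps)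
    finally show ?thesis using bounded[OF h, of "u - a"] by linarith
  qed
  moreover have "norm (Ahl h (P h a)) \<le> (K * \<bar>M\<bar> + Cf) * norm y"
  proof -
    have "norm (P h (Al a)) \<le> K * (\<bar>M\<bar> * norm y)"
      using K(2)[OF h, of "Al a"] M[of y] mult_le_abs_mult[of _ M "norm y"] K(1)
      unfolding a_def by (meson mult_left_mono norm_ge_zero order_trans)
    moreover have "norm (P h (Al a) - Ahl h (P h a)) \<le> Cf * norm y" using consistent[OF h a(1)] a(2) by simp
    ultimately show ?thesis
      using norm_triangle_ineq4[of "P h (Al a)" "P h (Al a) - Ahl h (P h a)"] by (simp add: algebra_simps)
  qed
  ultimately show ?thesis unfolding y_def by (simp add: algebra_simps)
qed

lemma relative_bounds:
  obtains K1 K2 where "K1 \<ge> 0" "K2 \<ge> 0"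
    "\<And>h u. h \<in> I \<Longrightarrow> u \<in> V h \<Longrightarrow> norm (Ah1 h u) \<le> K1 * norm (Ah h u)"
    "\<And>h u. h \<in> I \<Longrightarrow> u \<in> V h \<Longrightarrow> norm (Ah2 h u) \<le> K2 * norm (Ah h u)"
proof -
  obtain K where K: "K \<ge> 0" "\<And>h x. h \<in> I \<Longrightarrow> norm (P h x) \<le> K * norm x"
    using uniformly_bounded_P by blast
  obtain M1 M2 where M1: "\<And>y. norm (A1 (inv_op D A y)) \<le> M1 * norm y"
    and M2: "\<And>y. norm (A2 (inv_op D A y)) \<le> M2 * norm y"
    using condA unfolding condA_def by blast
  note g = galerkin_splitting.lin_on_A1 galerkin_splitting.lin_on_A2
    galerkin_splitting.A1_P_bound galerkin_splitting.A2_P_bound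
  show thesis
  proof (rule that)
    show "Ce * Cg + K * \<bar>M1\<bar> + Cf \<ge> 0" "Ce * Cg + K * \<bar>M2\<bar> + Cf \<ge> 0"
      using Ce Cg K(1) Cf by simp_all
    show "norm (Ah1 h u) \<le> (Ce * Cg + K * \<bar>M1\<bar> + Cf) * norm (Ah h u)" if "h \<in> I" "u \<in> V h" for h u
      by (rule norm_part_le_norm_Ah[OF K M1 consistency1 g(3)[OF galerkin] g(1)[OF galerkin] that])
    show "norm (Ah2 h u) \<le> (Ce * Cg + K * \<bar>M2\<bar> + Cf) * norm (Ah h u)" if "h \<in> I" "u \<in> V h" for h u
      by (rule norm_part_le_norm_Ah[OF K M2 consistency2 g(4)[OF galerkin] g(2)[OF galerkin] that])
  qed
qed

lemma norm_splitting_defect_inv_op_le: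
  assumes h: "h \<in> I" and \<tau>: "\<tau> \<ge> 0" and K: "\<And>x. norm (P h x) \<le> K * norm x"
    and K1: "K1 \<ge> 0" "\<And>u. u \<in> V h \<Longrightarrow> norm (Ah1 h u) \<le> K1 * norm (Ah h u)"
    and K2: "K2 \<ge> 0" "\<And>u. u \<in> V h \<Longrightarrow> norm (Ah2 h u) \<le> K2 * norm (Ah h u)"
  shows "norm (splitting_defect (V h) (Ah h) (Ah1 h) (Ah2 h) \<tau> (P h (inv_op D A y)))
    \<le> ((1 + K1 + K2) * K + 4 * Ce * (Cp + Cg)) * \<tau> * norm y"
proof -
  interpret g: galerkin_splitting "V h" "P h" "Ah h" "Ah1 h" "Ah2 h" "ipV h" ca cb "Ce / h\<^sup>2"
    by (rule galerkin[OF h])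
  let ?S = "splitting_defect (V h) (Ah h) (Ah1 h) (Ah2 h) \<tau>"
  define a where "a = inv_op D A y"
  have a: "a \<in> D" "A a = y" using inv_op_solves by (simp_all add: a_def)
  define v where "v = inv_op (V h) (Ah h) (P h y)"
  have v: "v \<in> V h" "Ah h v = P h y" using g.inv_op_A[OF g.P_in] by (simp_all add: v_def)
  have "norm (P h a - v) \<le> norm (P h a - a) + norm (a - v)"
    using norm_triangle_ineq[of "P h a - a" "a - v"] by simp
  also have "\<dots> \<le> Cp * h\<^sup>2 * norm y + Cg * h\<^sup>2 * norm y"
    using projection_error[OF h a(1)] inverse_error[OF h, of y] a(2)
    by (simp add: a_def v_def norm_minus_commute add_mono)
  finally have d: "norm (P h a - v) \<le> (Cp + Cg) * h\<^sup>2 * norm y" by (simp add: algebra_simps)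
  have "?S (P h a) = ?S v + ?S (P h a - v)"
    using lin_on_add[OF g.lin_on_splitting_defect[OF \<tau>] v(1) subspace_diff[OF g.subspace_V g.P_in v(1)]]
    by simp
  then have "norm (?S (P h a)) \<le> norm (?S v) + norm (?S (P h a - v))" by (simp add: norm_triangle_ineq)
  moreover have "norm (?S v) \<le> (1 + K1 + K2) * K * \<tau> * norm y"
  proof -
    have "norm (?S v) \<le> \<tau> * (1 + K1 + K2) * norm (P h y)"
      using g.norm_splitting_defect_le_A[OF v(1) \<tau> K1(2) K2(2) K2(1)] v(2) by simp
    also have "\<dots> \<le> \<tau> * (1 + K1 + K2) * (K * norm y)"
      using K[of y] \<tau> K1(1) K2(1) by (intro mult_left_mono) auto
    finally show ?thesis by (simp only: mult_ac)
  qed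
  moreover have "norm (?S (P h a - v)) \<le> 4 * Ce * (Cp + Cg) * \<tau> * norm y"
  proof -
    have "norm (?S (P h a - v)) \<le> 4 * \<tau> * (Ce / h\<^sup>2) * norm (P h a - v)"
      by (rule g.norm_splitting_defect_le_ce[OF subspace_diff[OF g.subspace_V g.P_in v(1)] \<tau>])
    also have "\<dots> \<le> 4 * \<tau> * (Ce / h\<^sup>2) * ((Cp + Cg) * h\<^sup>2 * norm y)"
      using d Ce \<tau> by (intro mult_left_mono) auto
    also have "\<dots> = 4 * Ce * (Cp + Cg) * \<tau> * norm y"
      using h_pos[OF h] by (simp add: field_simps)
    finally show ?thesis .
  qed
  ultimately show ?thesis unfolding a_def by (simp add: algebra_simps)
qed

lemma norm_splitting_defect_P_le:
  assumes h: "h \<in> I" and \<tau>: "\<tau> \<ge> 0" and K: "K \<ge> 0" "\<And>x. norm (P h x) \<le> K * norm x"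
    and K2: "K2 \<ge> 0" "\<And>u. u \<in> V h \<Longrightarrow> norm (Ah2 h u) \<le> K2 * norm (Ah h u)"
  shows "norm (splitting_defect (V h) (Ah h) (Ah1 h) (Ah2 h) \<tau> (P h y)) \<le> (2 + K2 * (\<bar>cb\<bar> / ca)) * K * norm y"
proof -
  interpret g: galerkin_splitting "V h" "P h" "Ah h" "Ah1 h" "Ah2 h" "ipV h" ca cb "Ce / h\<^sup>2"
    by (rule galerkin[OF h])
  have "norm (splitting_defect (V h) (Ah h) (Ah1 h) (Ah2 h) \<tau> (P h y))
      \<le> (2 + K2 * (\<bar>cb\<bar> / ca)) * norm (P h y)"
    by (rule g.norm_splitting_defect_le[OF g.P_in \<tau> K2(2) K2(1)])
  also have "\<dots> \<le> (2 + K2 * (\<bar>cb\<bar> / ca)) * (K * norm y)"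
    using K(2) K2(1) ca_pos by (intro mult_left_mono) auto
  finally show ?thesis by (simp only: mult.assoc)
qed

lemma norm_splitting_defect_neg_frac_pow_le:
  assumes \<zeta>: "\<zeta> \<in> {0..1}"
  obtains C where "\<And>h \<tau> x. h \<in> I \<Longrightarrow> \<tau> > 0 \<Longrightarrow>
    norm (splitting_defect (V h) (Ah h) (Ah1 h) (Ah2 h) \<tau> (P h (neg_frac_pow D A \<zeta> x))) \<le> C * \<tau> powr \<zeta> * norm x"
proof -
  obtain K where K: "K \<ge> 0" "\<And>h x. h \<in> I \<Longrightarrow> norm (P h x) \<le> K * norm x"
    using uniformly_bounded_P by blast
  obtain K1 K2 where K1: "K1 \<ge> 0" "\<And>h u. h \<in> I \<Longrightarrow> u \<in> V h \<Longrightarrow> norm (Ah1 h u) \<le> K1 * norm (Ah h u)"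
    and K2: "K2 \<ge> 0" "\<And>h u. h \<in> I \<Longrightarrow> u \<in> V h \<Longrightarrow> norm (Ah2 h u) \<le> K2 * norm (Ah h u)"
    using relative_bounds by metis
  show thesis
  proof (rule neg_frac_pow_interpolation[OF \<zeta>, where J = I
        and T = "\<lambda>h \<tau> y. splitting_defect (V h) (Ah h) (Ah1 h) (Ah2 h) \<tau> (P h y)"])
    show "(2 + K2 * (\<bar>cb\<bar> / ca)) * K \<ge> 0" "(1 + K1 + K2) * K + 4 * Ce * (Cp + Cg) \<ge> 0"
      using K(1) K1(1) K2(1) Ce Cp Cg ca_pos by simp_all
    show "linear (\<lambda>y. splitting_defect (V h) (Ah h) (Ah1 h) (Ah2 h) \<tau> (P h y))" if "h \<in> I" "\<tau> > 0" for h \<tau>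
    proof -
      interpret g: galerkin_splitting "V h" "P h" "Ah h" "Ah1 h" "Ah2 h" "ipV h" ca cb "Ce / h\<^sup>2"
        by (rule galerkin[OF that(1)])
      show ?thesis using g.linear_lin_on_comp_P[OF g.lin_on_splitting_defect] that(2) by simp
    qed
  qed (use that norm_splitting_defect_P_le[OF _ _ K(1) K(2) K2(1) K2(2)]
       norm_splitting_defect_inv_op_le[OF _ _ K(2) K1(1) K1(2) K2(1) K2(2)] in auto)
qed

end

theorem lemma4p3:
  fixes D D1 D2 :: "'a::{real_inner, complete_space} set"
    and A A1 A2 :: "'a \<Rightarrow> 'a"
    and I :: "real set"
    and V :: "real \<Rightarrow> 'a set"
    and P :: "real \<Rightarrow> 'a \<Rightarrow> 'a"
    and ipV :: "real \<Rightarrow> 'a \<Rightarrow> 'a \<Rightarrow> real"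
    and Ah Ah1 Ah2 :: "real \<Rightarrow> 'a \<Rightarrow> 'a"
  assumes "condA D A D1 A1 D2 A2"
    and "condP I V P D A"
    and "condAh I V P ipV Ah Ah1 Ah2 D A A1 A2"
  shows "\<forall>\<zeta>\<in>{0..1}. \<exists>C. \<forall>h\<in>I. \<forall>\<tau>>0. \<forall>x.
           (let v = P h (neg_frac_pow D A \<zeta> x);
                w = semigroup_op (Ah h) \<tau> v
                    - shift_inv (V h) (Ah2 h) \<tau> (shift_inv (V h) (Ah1 h) \<tau> v)
            in norm (w + \<tau> *\<^sub>R Ah2 h w)) \<le> C * \<tau> powr \<zeta> * norm x"
proof
  fix \<zeta> :: real assume \<zeta>: "\<zeta> \<in> {0..1}"
  obtain ca cb Ce Cf Cg Cp where
    "uniform_galerkin_splitting D D1 D2 A A1 A2 I V P ipV Ah Ah1 Ah2 ca cb Ce Cf Cg Cp"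
    using uniform_galerkin_splitting_exists[OF assms] .
  then interpret uniform_galerkin_splitting D D1 D2 A A1 A2 I V P ipV Ah Ah1 Ah2 ca cb Ce Cf Cg Cp .
  obtain C where "\<And>h \<tau> x. h \<in> I \<Longrightarrow> \<tau> > 0 \<Longrightarrow>
    norm (splitting_defect (V h) (Ah h) (Ah1 h) (Ah2 h) \<tau> (P h (neg_frac_pow D A \<zeta> x))) \<le> C * \<tau> powr \<zeta> * norm x"
    using norm_splitting_defect_neg_frac_pow_le[OF \<zeta>] by blast
  then show "\<exists>C. \<forall>h\<in>I. \<forall>\<tau>>0. \<forall>x.
           (let v = P h (neg_frac_pow D A \<zeta> x);
                w = semigroup_op (Ah h) \<tau> v
                    - shift_inv (V h) (Ah2 h) \<tau> (shift_inv (V h) (Ah1 h) \<tau> v)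
            in norm (w + \<tau> *\<^sub>R Ah2 h w)) \<le> C * \<tau> powr \<zeta> * norm x"
    unfolding splitting_defect_def Let_def by blast
qed

end
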